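(* Let $\mathcal H$ be a $d$-dimensional Hilbert space with orthonormal basis $\lvert1\rangle,\dots,\lvert d\rangle$, set $\widetilde E_{d(n-1)+m}=\lvert n\rangle\langle m\rvert$ for $n,m\in\{1,\dots,d\}$, and let $\mathcal E:\mathcal L(\mathcal H)\to\mathcal L(\mathcal H)$ be a quantum channel with $\mathcal E(\rho)=\sum_{i,j}\widetilde E_i\rho\widetilde E_j^\dagger\chi_{ij}$. Let $\mathcal H^\dagger$ be a Hilbert space with orthonormal basis $\{\lvert j\rangle:j\in\{1,\dots,d^2\}\}$, and define $\chi=\sum_{j,k}\chi_{jk}\lvert j\rangle\langle k\rvert$ and, for $\rho\in\mathcal L(\mathcal H)$, $\widetilde\rho=\sum_{j,k}\operatorname{tr}(\widetilde E_j\rho\widetilde E_k^\dagger)\lvert j\rangle\langle k\rvert$. Then, up to a unitary transformation on $\mathcal H^\dagger$, the complementary channel $\mathcal E^\dagger:\mathcal L(\mathcal H)\to\mathcal L(\mathcal H^\dagger)$ is given by $$\mathcal E^\dagger(\rho)=\sqrt{\chi}^{\,*}\,\widetilde\rho\,\sqrt{\chi}^{\,*}.$$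
   Context: The complementary channel of $\mathcal E$ is $\rho\mapsto\operatorname{tr}_B(U\rho U^\dagger)$ where $U$ is an isometric extension of $\mathcal E$ (output space $B$, environment $\mathcal H^\dagger$); it is defined up to a unitary on the environment. $\sqrt\chi$ is the positive semidefinite square root of the (positive semidefinite) matrix $\chi$, and $^*$ denotes entrywise complex conjugation in the basis $\{\lvert j\rangle\}$. *)

theory Defs
  imports "Jordan_Normal_Form.Matrix"
begin

definition mtrace :: "complex mat \<Rightarrow> complex" where
  "mtrace A = (\<Sum>i<dim_row A. A $$ (i,i))"

definition adj :: "complex mat \<Rightarrow> complex mat" where
  "adj A = mat (dim_col A) (dim_row A) (\<lambda>(i,j). cnj (A $$ (j,i)))"

definition conj_mat :: "complex mat \<Rightarrow> complex mat" where
  "conj_mat A = map_mat cnj A"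

definition psd :: "nat \<Rightarrow> complex mat \<Rightarrow> bool" where
  "psd n A \<longleftrightarrow> A \<in> carrier_mat n n \<and> adj A = A \<and>
     (\<forall>v \<in> carrier_vec n. 0 \<le> Re (\<Sum>i<n. cnj (v $ i) * (A *\<^sub>v v) $ i))"

definition psd_sqrt :: "nat \<Rightarrow> complex mat \<Rightarrow> complex mat" where
  "psd_sqrt n A = (THE B. psd n B \<and> B * B = A)"

definition unitary_mat :: "nat \<Rightarrow> complex mat \<Rightarrow> bool" where
  "unitary_mat n W \<longleftrightarrow> W \<in> carrier_mat n n \<and> adj W * W = 1\<^sub>m n"

(* Complete positivity: id_k (x) Phi preserves positivity for all k, where a (k*n)x(k*n)
   matrix is read as a k x k block matrix of n x n blocks (ordering C^k (x) C^n). *)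

definition blk :: "nat \<Rightarrow> complex mat \<Rightarrow> nat \<Rightarrow> nat \<Rightarrow> complex mat" where
  "blk n X a b = mat n n (\<lambda>(i,j). X $$ (a*n+i, b*n+j))"

definition ampl :: "nat \<Rightarrow> nat \<Rightarrow> nat \<Rightarrow> (complex mat \<Rightarrow> complex mat) \<Rightarrow> complex mat \<Rightarrow> complex mat" where
  "ampl k n m \<Phi> X = mat (k*m) (k*m) (\<lambda>(r,c). \<Phi> (blk n X (r div m) (c div m)) $$ (r mod m, c mod m))"

definition quantum_channel :: "nat \<Rightarrow> nat \<Rightarrow> (complex mat \<Rightarrow> complex mat) \<Rightarrow> bool" where
  "quantum_channel n m \<Phi> \<longleftrightarrow>
     (\<forall>A \<in> carrier_mat n n. \<Phi> A \<in> carrier_mat m m) \<and>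
     (\<forall>A \<in> carrier_mat n n. \<forall>B \<in> carrier_mat n n. \<Phi> (A + B) = \<Phi> A + \<Phi> B) \<and>
     (\<forall>A \<in> carrier_mat n n. \<forall>c. \<Phi> (c \<cdot>\<^sub>m A) = c \<cdot>\<^sub>m \<Phi> A) \<and>
     (\<forall>A \<in> carrier_mat n n. mtrace (\<Phi> A) = mtrace A) \<and>
     (\<forall>k. \<forall>X. psd (k*n) X \<longrightarrow> psd (k*m) (ampl k n m \<Phi> X))"

(* Partial traces on C^dB (x) C^dE, basis |b>|e> has index b*dE + e. *)
definition ptrace_env :: "nat \<Rightarrow> nat \<Rightarrow> complex mat \<Rightarrow> complex mat" where
  "ptrace_env dB dE X = mat dB dB (\<lambda>(b,b'). \<Sum>e<dE. X $$ (b*dE+e, b'*dE+e))"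

definition ptrace_out :: "nat \<Rightarrow> nat \<Rightarrow> complex mat \<Rightarrow> complex mat" where
  "ptrace_out dB dE X = mat dE dE (\<lambda>(e,e'). \<Sum>b<dB. X $$ (b*dE+e, b*dE+e'))"

definition isometric_extension :: "nat \<Rightarrow> nat \<Rightarrow> nat \<Rightarrow> (complex mat \<Rightarrow> complex mat) \<Rightarrow> complex mat \<Rightarrow> bool" where
  "isometric_extension dA dB dE \<Phi> U \<longleftrightarrow>
     U \<in> carrier_mat (dB*dE) dA \<and> adj U * U = 1\<^sub>m dA \<and>
     (\<forall>\<rho> \<in> carrier_mat dA dA. \<Phi> \<rho> = ptrace_env dB dE (U * \<rho> * adj U))"

(* E~_i = |i div d><i mod d|, i < d^2 (0-based version of E~_{d(n-1)+m} = |n><m|) *)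
definition Et :: "nat \<Rightarrow> nat \<Rightarrow> complex mat" where
  "Et d i = mat d d (\<lambda>(r,c). if r = i div d \<and> c = i mod d then 1 else 0)"

definition chi_channel :: "nat \<Rightarrow> complex mat \<Rightarrow> complex mat \<Rightarrow> complex mat" where
  "chi_channel d \<chi> \<rho> = mat d d (\<lambda>(r,c).
     \<Sum>i<d^2. \<Sum>j<d^2. (Et d i * \<rho> * adj (Et d j)) $$ (r,c) * \<chi> $$ (i,j))"

definition rho_tilde :: "nat \<Rightarrow> complex mat \<Rightarrow> complex mat" where
  "rho_tilde d \<rho> = mat (d^2) (d^2) (\<lambda>(j,k). mtrace (Et d j * \<rho> * adj (Et d k)))"

end

theory Submission
  imports Defs "Jordan_Normal_Form.Char_Poly" "HOL-Computational_Algebra.Fundamental_Theorem_Algebra"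
begin

text \<open>
  Complete positivity, applied to the maximally entangled projector, shows that \<open>\<chi>\<close> is
  positive semidefinite (Choi), so by the spectral theorem it has a unique positive square root
  \<open>S\<close>. Reshape an isometric extension \<open>U\<close> into the \<open>d\<^sup>2 \<times> d\<^sup>2\<close> matrix \<open>G\<close> whose entry at
  \<open>((b,a),e)\<close> is \<open>\<langle>b,e|U|a\<rangle>\<close>. The channel equation for \<open>U\<close> says exactly \<open>G G\<^sup>\<dagger> = \<chi> = S S\<close>,
  and a direct computation gives \<open>tr\<^sub>B (U \<rho> U\<^sup>\<dagger>) = G\<^sup>T \<rho>' G\<^sup>*\<close> with \<open>\<rho>'\<close> the matrix
  \<open>rho_tilde d \<rho>\<close>. Unitary freedom of the factorisation of \<open>\<chi>\<close> gives \<open>G = S Z\<close> with \<open>Z\<close>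
  unitary; since \<open>S\<close> is Hermitian, \<open>G\<^sup>T = Z\<^sup>T S\<^sup>*\<close> and \<open>G\<^sup>* = S\<^sup>* (Z\<^sup>T)\<^sup>\<dagger>\<close>, so \<open>W = Z\<^sup>T\<close>.
  Conversely \<open>|a\<rangle> \<mapsto> \<Sum>\<^bsub>b,e\<^esub> S\<^bsub>(b,a),e\<^esub> |b\<rangle>|e\<rangle>\<close> is an isometric extension; that it is
  an isometry is trace preservation.
\<close>

lemma mult_add_less_mult:
  fixes x i a N :: nat
  assumes "x < a" "i < N"
  shows "x*N + i < a*N"
proof -
  have "x*N + i < Suc x * N" using assms by simp
  also have "\<dots> \<le> a * N" using assms by (intro mult_le_mono1) simp
  finally show ?thesis .
qed

lemma div_mod_less_of_less_square:
  fixes i d :: nat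
  assumes "i < d*d"
  shows "i div d < d" "i mod d < d"
  using assms by (cases "d = 0"; simp add: less_mult_imp_div_less)+

lemma sum_lessThan_mult:
  fixes a b :: nat
  shows "(\<Sum>p<a*b. f p) = (\<Sum>i<a. \<Sum>j<b. f (i*b+j))"
proof -
  have "(\<Sum>p<a*b. f p) = (\<Sum>i<a. sum f {i*b..<i*b+b})"
    using sum.nat_group[of f b a] by simp
  also have "\<dots> = (\<Sum>i<a. \<Sum>j<b. f (i*b+j))"
    by (simp add: sum.atLeastLessThan_shift_0 atLeast0LessThan)
  finally show ?thesis .
qed

lemma sum_if_cond: "(\<Sum>a\<in>A. if P then f a else 0) = (if P then sum f A else 0)"
  by simp

lemma sum_lessThan_split:
  fixes m n :: nat
  assumes "m \<le> n"
  shows "(\<Sum>k<n. f k) = (\<Sum>k<m. f k) + (\<Sum>k<n-m. f (k+m))"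
proof -
  have "(\<Sum>k<n. f k) = (\<Sum>k<m. f k) + sum f {m..<n}"
    using sum.atLeastLessThan_concat[of 0 m n f] assms by (simp add: atLeast0LessThan)
  also have "sum f {m..<n} = (\<Sum>k<n-m. f (k+m))"
    by (simp add: sum.atLeastLessThan_shift_0 atLeast0LessThan add.commute)
  finally show ?thesis .
qed

lemma sum_lessThan_involution:
  assumes "\<forall>i<n. \<sigma> i < n \<and> \<sigma> (\<sigma> i) = i"
  shows "(\<Sum>i<n. g (\<sigma> i)) = (\<Sum>i<n. g i)"
  by (rule sum.reindex_bij_witness[of _ \<sigma> \<sigma>]) (use assms in auto)

lemma dim_adj [simp]: "dim_row (adj A) = dim_col A" "dim_col (adj A) = dim_row A"
  by (auto simp: adj_def)

lemma index_adj [simp]: "i < dim_col A \<Longrightarrow> j < dim_row A \<Longrightarrow> adj A $$ (i,j) = cnj (A $$ (j,i))"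
  unfolding adj_def by simp

lemma adj_carrier_mat [simp]: "A \<in> carrier_mat n m \<Longrightarrow> adj A \<in> carrier_mat m n"
  unfolding carrier_mat_def by simp

lemma adj_adj [simp]: "adj (adj A) = A"
  by (rule eq_matI) simp_all

lemma adj_mult: "dim_col A = dim_row B \<Longrightarrow> adj (A * B) = adj B * adj A"
  by (rule eq_matI) (simp_all add: scalar_prod_def mult.commute)

lemma assoc_mult_mat_dims: "dim_col A = dim_row B \<Longrightarrow> dim_col B = dim_row C \<Longrightarrow> A * B * C = A * (B * C)"
  by (rule assoc_mult_mat[of A _ _ B _ C _]) auto

lemma assoc_mult_mat_vec_dims: "dim_col A = dim_row B \<Longrightarrow> dim_col B = dim_vec v \<Longrightarrow> (A * B) *\<^sub>v v = A *\<^sub>v (B *\<^sub>v v)"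
  by (rule assoc_mult_mat_vec[of A _ _ B _ v]) auto

lemma adj_sandwich: "dim_row A = dim_row B \<Longrightarrow> dim_col B = dim_row C \<Longrightarrow> adj (adj A * B * C) = adj C * adj B * A"
  by (simp add: adj_mult assoc_mult_mat_dims)

lemma hermitian_cnj_index:
  assumes "adj S = S" "S \<in> carrier_mat n n" "i < n" "j < n"
  shows "cnj (S $$ (i,j)) = S $$ (j,i)"
  using assms index_adj[of j S i] by auto

lemma index_hermitian_square:
  assumes "S \<in> carrier_mat n n" "adj S = S" "x < n" "y < n"
  shows "(S * S) $$ (x,y) = (\<Sum>e<n. S $$ (x,e) * cnj (S $$ (y,e)))"
  using assms hermitian_cnj_index[OF assms(2,1)] by (simp add: scalar_prod_def atLeast0LessThan)

lemma unitary_matD: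
  assumes "unitary_mat n W"
  shows "W \<in> carrier_mat n n" "adj W * W = 1\<^sub>m n" "W * adj W = 1\<^sub>m n"
  using assms mat_mult_left_right_inverse[of "adj W" n W] unfolding unitary_mat_def by auto

lemma adj_one_mat [simp]: "adj (1\<^sub>m n) = 1\<^sub>m n"
  by (rule eq_matI) simp_all

lemma unitary_mat_one: "unitary_mat n (1\<^sub>m n)"
  unfolding unitary_mat_def by simp

lemma unitary_mat_adj: "unitary_mat n W \<Longrightarrow> unitary_mat n (adj W)"
  using unitary_matD[of n W] unfolding unitary_mat_def by auto

lemma unitary_mat_cancel:
  assumes "unitary_mat n W"
  shows "dim_row Z = n \<Longrightarrow> W * (adj W * Z) = Z" "dim_row Z = n \<Longrightarrow> adj W * (W * Z) = Z"
    "dim_col X = n \<Longrightarrow> X * (W * adj W) = X" "dim_col X = n \<Longrightarrow> X * (adj W * W) = X"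
  using unitary_matD[OF assms]
  by (auto simp: assoc_mult_mat_dims[symmetric] intro!: left_mult_one_mat right_mult_one_mat)

lemma unitary_sandwich_mult:
  assumes "unitary_mat n W" "X \<in> carrier_mat n n" "Y \<in> carrier_mat n n"
  shows "(W * X * adj W) * (W * Y * adj W) = W * (X * Y) * adj W"
  using assms unitary_matD(1)[OF assms(1)] unitary_mat_cancel(2)[OF assms(1)]
  by (simp add: assoc_mult_mat_dims)

lemma unitary_sandwich_cancel:
  assumes "unitary_mat n W" "X \<in> carrier_mat n n"
  shows "adj W * (W * X * adj W) * W = X"
  using assms unitary_matD(1)[OF assms(1)] unitary_mat_cancel[OF assms(1)]
  by (simp add: assoc_mult_mat_dims)

lemma unitary_mat_mult:
  assumes "unitary_mat n V" "unitary_mat n W"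
  shows "unitary_mat n (V * W)"
  using unitary_matD[OF assms(1)] unitary_matD[OF assms(2)]
  unfolding unitary_mat_def
  by (simp add: adj_mult assoc_mult_mat_dims unitary_mat_cancel(2)[OF assms(1)])

lemma dim_conj_mat [simp]: "dim_row (conj_mat A) = dim_row A" "dim_col (conj_mat A) = dim_col A"
  unfolding conj_mat_def by simp_all

lemma conj_mat_mult: "dim_col A = dim_row B \<Longrightarrow> conj_mat (A * B) = conj_mat A * conj_mat B"
  unfolding conj_mat_def by (rule eq_matI) (simp_all add: scalar_prod_def)

lemma transpose_hermitian:
  assumes "S \<in> carrier_mat n n" "adj S = S"
  shows "transpose_mat S = conj_mat S"
  by (rule eq_matI) (use assms hermitian_cnj_index[OF assms(2,1)] in \<open>auto simp: conj_mat_def\<close>)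

lemma adj_transpose_mat: "adj (transpose_mat Z) = transpose_mat (adj Z)"
  by (rule eq_matI) simp_all

lemma transpose_adj: "transpose_mat (adj Z) = conj_mat Z"
  unfolding conj_mat_def by (rule eq_matI) simp_all

lemma unitary_mat_transpose:
  assumes "unitary_mat n Z"
  shows "unitary_mat n (transpose_mat Z)"
proof -
  have Z: "Z \<in> carrier_mat n n" using unitary_matD(1)[OF assms] .
  have "adj (transpose_mat Z) * transpose_mat Z = transpose_mat (Z * adj Z)"
    using Z by (simp add: transpose_mult[of Z n n "adj Z" n] adj_transpose_mat)
  also have "\<dots> = 1\<^sub>m n" using unitary_matD(3)[OF assms] by simp
  finally show ?thesis using Z unfolding unitary_mat_def by simp
qed

lemma adj_minus: "A \<in> carrier_mat n m \<Longrightarrow> B \<in> carrier_mat n m \<Longrightarrow> adj (A - B) = adj A - adj B"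
  by (rule eq_matI) auto

lemma mult_mat_eq_zero_if_cols:
  assumes "A \<in> carrier_mat m n" "C \<in> carrier_mat n k" "\<And>j. j < k \<Longrightarrow> A *\<^sub>v col C j = 0\<^sub>v m"
  shows "A * C = 0\<^sub>m m k"
proof (rule eq_matI)
  fix i j assume "i < dim_row (0\<^sub>m m k :: 'a mat)" "j < dim_col (0\<^sub>m m k :: 'a mat)"
  hence ij: "i < m" "j < k" by auto
  have "(A * C) $$ (i,j) = col (A * C) j $ i" using assms(1,2) ij by simp
  also have "\<dots> = 0" using col_mult2[OF assms(1,2) ij(2)] assms(3)[OF ij(2)] ij by simp
  finally show "(A * C) $$ (i,j) = 0\<^sub>m m k $$ (i,j)" using ij by simp
qed (use assms in auto)

definition diag_fun_mat :: "nat \<Rightarrow> (nat \<Rightarrow> complex) \<Rightarrow> complex mat" where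
  "diag_fun_mat n f = mat n n (\<lambda>(i,j). if i = j then f i else 0)"

lemma diag_fun_mat_carrier [simp]: "diag_fun_mat n f \<in> carrier_mat n n"
  unfolding diag_fun_mat_def by simp

lemma dim_diag_fun_mat [simp]: "dim_row (diag_fun_mat n f) = n" "dim_col (diag_fun_mat n f) = n"
  unfolding diag_fun_mat_def by simp_all

lemma index_mult_diag_fun_mat_right:
  assumes "W \<in> carrier_mat k n" "r < k" "i < n"
  shows "(W * diag_fun_mat n f) $$ (r,i) = W $$ (r,i) * f i"
proof -
  have "(W * diag_fun_mat n f) $$ (r,i) = (\<Sum>j<n. W $$ (r,j) * (if j = i then f j else 0))"
    using assms unfolding diag_fun_mat_def by (simp add: scalar_prod_def atLeast0LessThan)
  also have "\<dots> = (\<Sum>j<n. if j = i then W $$ (r,j) * f j else 0)"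
    by (rule sum.cong) auto
  finally show ?thesis using assms(3) by simp
qed

lemma index_mult_diag_fun_mat_left:
  assumes "W \<in> carrier_mat n k" "r < n" "i < k"
  shows "(diag_fun_mat n f * W) $$ (r,i) = f r * W $$ (r,i)"
proof -
  have "(diag_fun_mat n f * W) $$ (r,i) = (\<Sum>j<n. (if r = j then f r else 0) * W $$ (j,i))"
    using assms unfolding diag_fun_mat_def by (simp add: scalar_prod_def atLeast0LessThan)
  also have "\<dots> = (\<Sum>j<n. if j = r then f r * W $$ (j,i) else 0)"
    by (rule sum.cong) auto
  finally show ?thesis using assms(2) by simp
qed

lemma index_diag_fun_mat_mult_vec:
  assumes "c \<in> carrier_vec n" "k < n"
  shows "(diag_fun_mat n f *\<^sub>v c) $ k = f k * c $ k"
  using assms unfolding diag_fun_mat_def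
  by (simp add: scalar_prod_def atLeast0LessThan if_distrib[of "\<lambda>x. x * _"] cong: if_cong)

lemma diag_fun_mat_mult: "diag_fun_mat n f * diag_fun_mat n g = diag_fun_mat n (\<lambda>i. f i * g i)"
proof (rule eq_matI)
  fix i j assume "i < dim_row (diag_fun_mat n (\<lambda>i. f i * g i))"
      "j < dim_col (diag_fun_mat n (\<lambda>i. f i * g i))"
  then show "(diag_fun_mat n f * diag_fun_mat n g) $$ (i,j) = diag_fun_mat n (\<lambda>i. f i * g i) $$ (i,j)"
    using index_mult_diag_fun_mat_right[where W="diag_fun_mat n f" and k=n and n=n and f=g]
    by (simp add: diag_fun_mat_def)
qed (simp_all add: diag_fun_mat_def)

lemma adj_diag_fun_mat_real:
  "adj (diag_fun_mat n (\<lambda>i. complex_of_real (f i))) = diag_fun_mat n (\<lambda>i. complex_of_real (f i))"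
  unfolding diag_fun_mat_def by (rule eq_matI) auto

lemma index_sandwich:
  assumes "U \<in> carrier_mat m k" "\<rho> \<in> carrier_mat k k" "V \<in> carrier_mat m' k" "p < m" "q < m'"
  shows "(U * \<rho> * adj V) $$ (p,q) = (\<Sum>a<k. \<Sum>a'<k. U $$ (p,a) * \<rho> $$ (a,a') * cnj (V $$ (q,a')))"
proof -
  have "(U * \<rho> * adj V) $$ (p,q) = (\<Sum>a'<k. \<Sum>a<k. U $$ (p,a) * \<rho> $$ (a,a') * cnj (V $$ (q,a')))"
    using assms by (simp add: scalar_prod_def atLeast0LessThan sum_distrib_right)
  also have "\<dots> = (\<Sum>a<k. \<Sum>a'<k. U $$ (p,a) * \<rho> $$ (a,a') * cnj (V $$ (q,a')))"
    by (rule sum.swap)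
  finally show ?thesis .
qed

section \<open>Orthonormal families\<close>

definition cinner :: "nat \<Rightarrow> (nat \<Rightarrow> complex) \<Rightarrow> (nat \<Rightarrow> complex) \<Rightarrow> complex" where
  "cinner n u v = (\<Sum>r<n. cnj (u r) * v r)"

definition orthonormal_fam :: "nat \<Rightarrow> nat set \<Rightarrow> (nat \<Rightarrow> nat \<Rightarrow> complex) \<Rightarrow> bool" where
  "orthonormal_fam n I f \<longleftrightarrow> (\<forall>i\<in>I. \<forall>j\<in>I. cinner n (f i) (f j) = (if i = j then 1 else 0))"

lemma cinner_cong: "(\<And>r. r < n \<Longrightarrow> u r = u' r) \<Longrightarrow> (\<And>r. r < n \<Longrightarrow> v r = v' r) \<Longrightarrow> cinner n u v = cinner n u' v'"
  unfolding cinner_def by (intro sum.cong) auto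

lemma cinner_add_right: "cinner n u (\<lambda>k. v k + w k) = cinner n u v + cinner n u w"
  unfolding cinner_def by (simp add: distrib_left sum.distrib)

lemma cinner_commute: "cinner n u v = cnj (cinner n v u)"
  unfolding cinner_def by (simp add: mult.commute)

lemma cinner_scale_right: "cinner n u (\<lambda>k. c * v k) = c * cinner n u v"
  unfolding cinner_def by (simp add: sum_distrib_left mult.left_commute)

lemma cinner_self: "cinner n u u = complex_of_real (\<Sum>r<n. (cmod (u r))\<^sup>2)"
  unfolding cinner_def of_real_sum by (intro sum.cong refl) (metis complex_norm_square mult.commute)

lemma cinner_self_eq_0_iff: "cinner n u u = 0 \<longleftrightarrow> (\<forall>r<n. u r = 0)"
  unfolding cinner_self of_real_eq_0_iff by (subst sum_nonneg_eq_0_iff) auto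

lemma exists_unit_multiple:
  assumes "r < n" "u r \<noteq> 0"
  shows "\<exists>c. cinner n (\<lambda>k. c * u k) (\<lambda>k. c * u k) = 1"
proof -
  define s where "s = (\<Sum>r<n. (cmod (u r))\<^sup>2)"
  have "complex_of_real s \<noteq> 0"
    using assms cinner_self_eq_0_iff[of n u] by (simp only: cinner_self s_def) blast
  moreover have "s \<ge> 0" unfolding s_def by (intro sum_nonneg) simp
  ultimately have s: "s > 0" by simp
  define c where "c = complex_of_real (1 / sqrt s)"
  have "cinner n (\<lambda>k. c * u k) (\<lambda>k. c * u k) = cnj c * c * complex_of_real s"
    by (simp add: cinner_scale_right cinner_commute[of n "\<lambda>k. c * u k"] cinner_self s_def)
  also have "\<dots> = 1" using s unfolding c_def by (simp flip: of_real_mult)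
  finally show ?thesis by blast
qed

lemma exists_unit_smult_vec:
  assumes "v \<in> carrier_vec n" "v \<noteq> 0\<^sub>v n"
  shows "\<exists>c. cinner n (($) (c \<cdot>\<^sub>v v)) (($) (c \<cdot>\<^sub>v v)) = 1"
proof -
  obtain r where "r < n" "v $ r \<noteq> 0"
    using assms by (metis eq_vecI carrier_vecD index_zero_vec(1,2))
  then obtain c where "cinner n (\<lambda>q. c * v $ q) (\<lambda>q. c * v $ q) = 1"
    using exists_unit_multiple by blast
  hence "cinner n (($) (c \<cdot>\<^sub>v v)) (($) (c \<cdot>\<^sub>v v)) = 1"
    using assms(1) by (subst cinner_cong[of n _ "\<lambda>q. c * v $ q"]) auto
  thus ?thesis by blast
qed

lemma cinner_col_adj_mult_vec:
  assumes "W \<in> carrier_mat n k" "u \<in> carrier_vec n" "i < k"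
  shows "cinner n (\<lambda>r. W $$ (r,i)) (($) u) = (adj W *\<^sub>v u) $ i"
  using assms by (simp add: cinner_def scalar_prod_def atLeast0LessThan)

lemma index_adj_mult_mat:
  assumes "T \<in> carrier_mat m n" "i < n" "j < n"
  shows "(adj T * T) $$ (i,j) = cinner m (\<lambda>r. T $$ (r,i)) (\<lambda>r. T $$ (r,j))"
  using assms by (simp add: cinner_def scalar_prod_def atLeast0LessThan)

text \<open>Gram--Schmidt step: some standard basis vector has a nonzero component orthogonal to the
  family, since otherwise the traces of the identity and of the projection onto the family agree.\<close>

lemma orthonormal_fam_exists_orthogonal:
  assumes fin: "finite I" and card: "card I < n" and on: "orthonormal_fam n I f"
  shows "\<exists>v. cinner n v v = 1 \<and> (\<forall>i\<in>I. cinner n (f i) v = 0)"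
proof -
  define w where "w k r = (if r = k then 1 else 0) - (\<Sum>i\<in>I. f i r * cnj (f i k))" for k r
  have "\<exists>k<n. w k k \<noteq> 0"
  proof (rule ccontr)
    assume "\<not> ?thesis"
    hence "(\<Sum>k<n. w k k) = 0" by simp
    moreover have "(\<Sum>k<n. \<Sum>i\<in>I. f i k * cnj (f i k)) = (\<Sum>i\<in>I. cinner n (f i) (f i))"
      unfolding cinner_def by (subst sum.swap) (simp add: mult.commute)
    moreover have "(\<Sum>i\<in>I. cinner n (f i) (f i)) = of_nat (card I)"
      using on unfolding orthonormal_fam_def by simp
    ultimately have "(of_nat n :: complex) = of_nat (card I)"
      unfolding w_def by (simp add: sum_subtractf)
    thus False using card of_nat_eq_iff by fastforce
  qed
  then obtain k where k: "k < n" "w k k \<noteq> 0" by blast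
  have orth: "cinner n (f j) (w k) = 0" if j: "j \<in> I" for j
  proof -
    have "cinner n (f j) (w k) = (\<Sum>r<n. cnj (f j r) * (if r = k then 1 else 0))
        - (\<Sum>r<n. \<Sum>i\<in>I. cnj (f j r) * f i r * cnj (f i k))"
      unfolding cinner_def w_def
      by (simp add: right_diff_distrib sum_subtractf sum_distrib_left mult.assoc)
    also have "(\<Sum>r<n. cnj (f j r) * (if r = k then 1 else 0)) = cnj (f j k)"
      using k(1) by (simp add: if_distrib cong: if_cong)
    also have "(\<Sum>r<n. \<Sum>i\<in>I. cnj (f j r) * f i r * cnj (f i k)) = (\<Sum>i\<in>I. cinner n (f j) (f i) * cnj (f i k))"
      unfolding cinner_def by (subst sum.swap) (simp add: sum_distrib_right)
    also have "\<dots> = cnj (f j k)"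
      using on j fin unfolding orthonormal_fam_def
      by (simp add: if_distrib[of "\<lambda>x. x * _"] cong: if_cong)
    finally show ?thesis by simp
  qed
  obtain c where "cinner n (\<lambda>q. c * w k q) (\<lambda>q. c * w k q) = 1"
    using exists_unit_multiple[of k n "w k"] k by blast
  moreover have "cinner n (f j) (\<lambda>q. c * w k q) = 0" if "j \<in> I" for j
    using orth[OF that] by (simp add: cinner_scale_right)
  ultimately show ?thesis by blast
qed

lemma orthonormal_fam_insert:
  assumes "orthonormal_fam n I f" "cinner n v v = 1" "\<forall>i\<in>I. cinner n (f i) v = 0"
  shows "orthonormal_fam n (insert j I) (f(j := v))"
proof -
  have v: "cinner n v (f i) = 0" if "i \<in> I" for i
    using assms(3) that cinner_commute[of n v "f i"] by simp
  show ?thesis unfolding orthonormal_fam_def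
  proof (intro ballI)
    fix a b assume "a \<in> insert j I" "b \<in> insert j I"
    then show "cinner n ((f(j := v)) a) ((f(j := v)) b) = (if a = b then 1 else 0)"
      using assms v unfolding orthonormal_fam_def by (cases "a = j"; cases "b = j") auto
  qed
qed

lemma orthonormal_fam_extend:
  assumes "I \<subseteq> {..<n}" "orthonormal_fam n I f"
  shows "\<exists>g. (\<forall>i\<in>I. g i = f i) \<and> orthonormal_fam n {..<n} g"
  using assms
proof (induction "card ({..<n} - I)" arbitrary: I f)
  case 0
  hence "I = {..<n}" by auto
  thus ?case using 0 by blast
next
  case (Suc x)
  then obtain j where j: "j \<in> {..<n} - I"
    by (metis card.empty empty_iff nat.distinct(1) subsetI subset_antisym)
  have fin: "finite I" using Suc.prems finite_subset by blast
  have "card I < card {..<n}" using Suc.prems j by (intro psubset_card_mono) auto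
  then obtain v where v: "cinner n v v = 1" "\<forall>i\<in>I. cinner n (f i) v = 0"
    using orthonormal_fam_exists_orthogonal[OF fin _ Suc.prems(2)] by auto
  have "{..<n} - insert j I = ({..<n} - I) - {j}" by auto
  hence x: "x = card ({..<n} - insert j I)" using Suc.hyps(2) j by (simp add: card_Diff_singleton)
  have sub: "insert j I \<subseteq> {..<n}" using Suc.prems(1) j by auto
  have on: "orthonormal_fam n (insert j I) (f(j := v))"
    by (rule orthonormal_fam_insert[OF Suc.prems(2) v])
  obtain g where g: "\<forall>i\<in>insert j I. g i = (f(j := v)) i" "orthonormal_fam n {..<n} g"
    using Suc.hyps(1)[OF x sub on] by blast
  have "\<forall>i\<in>I. g i = f i" using g(1) j by auto
  with g(2) show ?case by blast
qed

lemma orthonormal_fam_extend_unitary: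
  assumes "I \<subseteq> {..<n}" "orthonormal_fam n I f"
  shows "\<exists>W. unitary_mat n W \<and> (\<forall>i\<in>I. \<forall>r<n. W $$ (r,i) = f i r)"
proof -
  obtain g where g: "\<forall>i\<in>I. g i = f i" "orthonormal_fam n {..<n} g"
    using orthonormal_fam_extend[OF assms] by blast
  define W where "W = mat n n (\<lambda>(r,c). g c r)"
  have "adj W * W = 1\<^sub>m n"
  proof (rule eq_matI)
    fix i j assume "i < dim_row (1\<^sub>m n :: complex mat)" "j < dim_col (1\<^sub>m n :: complex mat)"
    hence "(adj W * W) $$ (i,j) = cinner n (g i) (g j)" and "i < n" "j < n"
      unfolding W_def cinner_def by (simp_all add: scalar_prod_def atLeast0LessThan)
    thus "(adj W * W) $$ (i,j) = 1\<^sub>m n $$ (i,j)" using g(2) unfolding orthonormal_fam_def by simp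
  qed (simp_all add: W_def)
  hence "unitary_mat n W" unfolding unitary_mat_def W_def by simp
  moreover have "\<forall>i\<in>I. \<forall>r<n. W $$ (r,i) = f i r" using g(1) assms(1) unfolding W_def by auto
  ultimately show ?thesis by blast
qed

lemma orthonormal_fam_unitary_cols:
  assumes "unitary_mat n W"
  shows "orthonormal_fam n {..<n} (\<lambda>c r. W $$ (r,c))"
proof -
  have "cinner n (\<lambda>r. W $$ (r,i)) (\<lambda>r. W $$ (r,j)) = (if i = j then 1 else 0)" if "i < n" "j < n" for i j
    using index_adj_mult_mat[OF unitary_matD(1)[OF assms] that] unitary_matD(2)[OF assms] that by simp
  thus ?thesis unfolding orthonormal_fam_def by auto
qed

section \<open>The spectral theorem for Hermitian matrices\<close>

lemma exists_eigenvector: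
  assumes "(M :: complex mat) \<in> carrier_mat k k" "k > 0"
  shows "\<exists>v \<mu>. eigenvector M v \<mu>"
proof -
  have "\<not> constant (poly (char_poly M))"
    using assms degree_monic_char_poly[OF assms(1)] by (simp add: constant_degree)
  then obtain z where "poly (char_poly M) z = 0" using fundamental_theorem_of_algebra by blast
  thus ?thesis using eigenvalue_root_char_poly[OF assms(1)] unfolding eigenvalue_def by blast
qed

lemma eigenvector_of_lower_block:
  assumes B: "B \<in> carrier_mat n n" and mn: "m \<le> n"
    and row: "\<And>i j. i < m \<Longrightarrow> m \<le> j \<Longrightarrow> j < n \<Longrightarrow> B $$ (i,j) = 0"
    and x: "x \<in> carrier_vec (n-m)" and Bx: "mat (n-m) (n-m) (\<lambda>(i,j). B $$ (i+m, j+m)) *\<^sub>v x = \<mu> \<cdot>\<^sub>v x"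
  defines "y \<equiv> vec n (\<lambda>k. if k < m then 0 else x $ (k-m))"
  shows "B *\<^sub>v y = \<mu> \<cdot>\<^sub>v y"
proof (rule eq_vecI)
  have y: "y \<in> carrier_vec n" unfolding y_def by simp
  fix i assume "i < dim_vec (\<mu> \<cdot>\<^sub>v y)"
  hence i: "i < n" using y by simp
  have "(B *\<^sub>v y) $ i = (\<Sum>k<m. B $$ (i,k) * y $ k) + (\<Sum>k<n-m. B $$ (i,k+m) * y $ (k+m))"
    using B i mn y sum_lessThan_split[of m n] by (simp add: scalar_prod_def atLeast0LessThan)
  also have "(\<Sum>k<m. B $$ (i,k) * y $ k) = 0"
    using mn unfolding y_def by (intro sum.neutral) auto
  also have "(\<Sum>k<n-m. B $$ (i,k+m) * y $ (k+m)) = (\<Sum>k<n-m. B $$ (i,k+m) * x $ k)"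
    unfolding y_def by (intro sum.cong) auto
  also have "0 + (\<Sum>k<n-m. B $$ (i,k+m) * x $ k) = (\<mu> \<cdot>\<^sub>v y) $ i"
  proof (cases "i < m")
    case True
    thus ?thesis using row i unfolding y_def by simp
  next
    case False
    have "(\<Sum>k<n-m. B $$ (i,k+m) * x $ k) = (mat (n-m) (n-m) (\<lambda>(i,j). B $$ (i+m, j+m)) *\<^sub>v x) $ (i - m)"
      using False i x by (simp add: scalar_prod_def atLeast0LessThan)
    thus ?thesis using Bx False i x unfolding y_def by simp
  qed
  finally show "(B *\<^sub>v y) $ i = (\<mu> \<cdot>\<^sub>v y) $ i" .
qed (use B in \<open>simp add: y_def\<close>)

text \<open>By hermiticity the first \<open>m\<close> rows vanish off the diagonal as well, so an eigenvector of
  the lower right block, padded with zeros, is an eigenvector of \<open>B\<close>.\<close>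

lemma hermitian_eigenvector_in_lower_block:
  assumes B: "B \<in> carrier_mat n n" and herm: "adj B = B" and mn: "m < n"
    and col: "\<forall>i<m. \<forall>j<n. i \<noteq> j \<longrightarrow> B $$ (j,i) = 0"
  shows "\<exists>y \<mu>. y \<in> carrier_vec n \<and> y \<noteq> 0\<^sub>v n \<and> (\<forall>i<m. y $ i = 0) \<and> B *\<^sub>v y = \<mu> \<cdot>\<^sub>v y"
proof -
  have row: "B $$ (i,j) = 0" if "i < m" "m \<le> j" "j < n" for i j
    using col that hermitian_cnj_index[OF herm B, of j i] mn by force
  define B' where "B' = mat (n-m) (n-m) (\<lambda>(i,j). B $$ (i+m, j+m))"
  have B': "B' \<in> carrier_mat (n-m) (n-m)" unfolding B'_def by simp
  obtain x \<mu> where "eigenvector B' x \<mu>" using exists_eigenvector[OF B'] mn by auto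
  hence x: "x \<in> carrier_vec (n-m)" "x \<noteq> 0\<^sub>v (n-m)" "B' *\<^sub>v x = \<mu> \<cdot>\<^sub>v x"
    using B' unfolding eigenvector_def by auto
  define y where "y = vec n (\<lambda>k. if k < m then 0 else x $ (k-m))"
  have "B *\<^sub>v y = \<mu> \<cdot>\<^sub>v y"
    unfolding y_def using eigenvector_of_lower_block[OF B _ row x(1)] x(3) mn unfolding B'_def by simp
  moreover have "y \<noteq> 0\<^sub>v n"
  proof
    assume y0: "y = 0\<^sub>v n"
    have "x $ k = 0" if k: "k < n - m" for k
      using arg_cong[OF y0, of "\<lambda>v. v $ (k+m)"] k unfolding y_def by simp
    thus False using x(1,2) by auto
  qed
  moreover have "\<forall>i<m. y $ i = 0" "y \<in> carrier_vec n" using mn unfolding y_def by simp_all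
  ultimately show ?thesis by blast
qed

lemma index_unitary_conj_eigenvector_col:
  assumes A: "A \<in> carrier_mat n n" and Wu: "unitary_mat n W" and ij: "i < n" "j < n" "i \<noteq> j"
    and ev: "A *\<^sub>v col W i = \<mu> \<cdot>\<^sub>v col W i"
  shows "(adj W * A * W) $$ (j,i) = 0"
proof -
  note W = unitary_matD[OF Wu]
  have "col (adj W * A * W) i = (adj W * A) *\<^sub>v col W i"
    by (rule col_mult2[of _ n n _ n]) (use A W(1) ij in auto)
  also have "\<dots> = adj W *\<^sub>v (\<mu> \<cdot>\<^sub>v col W i)"
    unfolding ev[symmetric] by (rule assoc_mult_mat_vec[of _ n n _ n]) (use A W(1) ij in auto)
  also have "\<dots> = \<mu> \<cdot>\<^sub>v (adj W *\<^sub>v col W i)"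
    by (rule mult_mat_vec[of _ n n]) (use W(1) in auto)
  also have "adj W *\<^sub>v col W i = col (adj W * W) i"
    by (rule col_mult2[of _ n n _ n, symmetric]) (use W(1) ij in auto)
  finally have "col (adj W * A * W) i $ j = 0" using W(2) ij by simp
  thus ?thesis using A W(1) ij by simp
qed

lemma hermitian_eigenvector_orthogonal_to_eigenvectors:
  assumes A: "A \<in> carrier_mat n n" and herm: "adj A = A" and mn: "m < n"
    and Wu: "unitary_mat n W" and ev: "\<forall>i<m. A *\<^sub>v col W i = lam i \<cdot>\<^sub>v col W i"
  shows "\<exists>v \<mu>. v \<in> carrier_vec n \<and> cinner n (($) v) (($) v) = 1 \<and> A *\<^sub>v v = \<mu> \<cdot>\<^sub>v v \<and>
    (\<forall>i<m. cinner n (\<lambda>r. W $$ (r,i)) (($) v) = 0)"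
proof -
  note W = unitary_matD[OF Wu]
  define B where "B = adj W * A * W"
  have B: "B \<in> carrier_mat n n" unfolding B_def using A W(1) by auto
  have WB: "W * B = A * W"
    unfolding B_def using A W(1) unitary_mat_cancel(1)[OF Wu] by (simp add: assoc_mult_mat_dims)
  have "adj B = B" unfolding B_def using A W(1) herm by (simp add: adj_sandwich)
  moreover have "\<forall>i<m. \<forall>j<n. i \<noteq> j \<longrightarrow> B $$ (j,i) = 0"
    unfolding B_def using index_unitary_conj_eigenvector_col[OF A Wu] ev mn by auto
  ultimately obtain y \<mu> where y: "y \<in> carrier_vec n" "y \<noteq> 0\<^sub>v n" "\<forall>i<m. y $ i = 0" "B *\<^sub>v y = \<mu> \<cdot>\<^sub>v y"
    using hermitian_eigenvector_in_lower_block[OF B _ mn] by blast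
  have Wy: "W *\<^sub>v y \<in> carrier_vec n" using W(1) y(1) by simp
  have adjWy: "adj W *\<^sub>v (W *\<^sub>v y) = y"
    using assoc_mult_mat_vec[OF adj_carrier_mat[OF W(1)] W(1) y(1)] W(2) y(1) by simp
  hence "W *\<^sub>v y \<noteq> 0\<^sub>v n" using y(2) W(1) by (auto intro!: eq_vecI)
  then obtain c where c: "cinner n (($) (c \<cdot>\<^sub>v (W *\<^sub>v y))) (($) (c \<cdot>\<^sub>v (W *\<^sub>v y))) = 1"
    using exists_unit_smult_vec[OF Wy] by blast
  have "A *\<^sub>v (c \<cdot>\<^sub>v (W *\<^sub>v y)) = c \<cdot>\<^sub>v ((W * B) *\<^sub>v y)"
    unfolding WB using mult_mat_vec[OF A Wy] assoc_mult_mat_vec[OF A W(1) y(1)] by simp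
  also have "\<dots> = \<mu> \<cdot>\<^sub>v (c \<cdot>\<^sub>v (W *\<^sub>v y))"
    using assoc_mult_mat_vec[OF W(1) B y(1)] mult_mat_vec[OF W(1) y(1)] y(4)
    by (simp add: smult_smult_assoc mult.commute)
  finally have Av: "A *\<^sub>v (c \<cdot>\<^sub>v (W *\<^sub>v y)) = \<mu> \<cdot>\<^sub>v (c \<cdot>\<^sub>v (W *\<^sub>v y))" .
  have orth: "cinner n (\<lambda>r. W $$ (r,i)) (($) (c \<cdot>\<^sub>v (W *\<^sub>v y))) = 0" if "i < m" for i
    using cinner_col_adj_mult_vec[OF W(1), of "c \<cdot>\<^sub>v (W *\<^sub>v y)" i] mult_mat_vec[OF adj_carrier_mat[OF W(1)] Wy]
      adjWy y(1,3) that mn Wy by simp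
  have "c \<cdot>\<^sub>v (W *\<^sub>v y) \<in> carrier_vec n" using Wy by simp
  with c Av orth show ?thesis by blast
qed

lemma hermitian_eigenvectors_extend:
  assumes A: "A \<in> carrier_mat n n" and herm: "adj A = A" and mn: "m < n"
    and Wu: "unitary_mat n W" and ev: "\<forall>i<m. A *\<^sub>v col W i = lam i \<cdot>\<^sub>v col W i"
  shows "\<exists>W' lam'. unitary_mat n W' \<and> (\<forall>i<Suc m. A *\<^sub>v col W' i = lam' i \<cdot>\<^sub>v col W' i)"
proof -
  obtain v \<mu> where v: "v \<in> carrier_vec n" "cinner n (($) v) (($) v) = 1" "A *\<^sub>v v = \<mu> \<cdot>\<^sub>v v"
    and orth: "\<forall>i<m. cinner n (\<lambda>r. W $$ (r,i)) (($) v) = 0"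
    using hermitian_eigenvector_orthogonal_to_eigenvectors[OF A herm mn Wu ev] by blast
  define f where "f = (\<lambda>c r. W $$ (r,c))(m := ($) v)"
  have "orthonormal_fam n {..<m} (\<lambda>c r. W $$ (r,c))"
    using orthonormal_fam_unitary_cols[OF Wu] mn unfolding orthonormal_fam_def by auto
  hence "orthonormal_fam n (insert m {..<m}) f"
    unfolding f_def using orthonormal_fam_insert v(2) orth by blast
  moreover have "insert m {..<m} \<subseteq> {..<n}" using mn by auto
  ultimately obtain W' where W': "unitary_mat n W'" "\<forall>i\<in>insert m {..<m}. \<forall>r<n. W' $$ (r,i) = f i r"
    using orthonormal_fam_extend_unitary by blast
  have cols: "col W' i = (if i = m then v else col W i)" if "i \<le> m" for i
    using W' unitary_matD(1)[OF W'(1)] unitary_matD(1)[OF Wu] v(1) that mn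
    by (intro eq_vecI) (auto simp: f_def)
  have "\<forall>i<Suc m. A *\<^sub>v col W' i = (lam(m := \<mu>)) i \<cdot>\<^sub>v col W' i"
    using cols ev v(3) by (auto simp: less_Suc_eq)
  thus ?thesis using W'(1) by blast
qed

lemma hermitian_eigenbasis:
  assumes A: "A \<in> carrier_mat n n" and herm: "adj A = A"
  shows "\<exists>W lam. unitary_mat n W \<and> (\<forall>i<n. A *\<^sub>v col W i = lam i \<cdot>\<^sub>v col W i)"
proof -
  have "m \<le> n \<Longrightarrow> \<exists>W lam. unitary_mat n W \<and> (\<forall>i<m. A *\<^sub>v col W i = lam i \<cdot>\<^sub>v col W i)" for m
  proof (induction m)
    case 0
    thus ?case using unitary_mat_one by blast
  next
    case (Suc m)
    hence "m < n" by simp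
    with Suc.IH obtain W lam where "unitary_mat n W" "\<forall>i<m. A *\<^sub>v col W i = lam i \<cdot>\<^sub>v col W i"
      by auto
    thus ?case using hermitian_eigenvectors_extend[OF A herm \<open>m < n\<close>] by blast
  qed
  thus ?thesis by blast
qed

theorem hermitian_spectral_decomposition:
  assumes A: "A \<in> carrier_mat n n" and herm: "adj A = A"
  shows "\<exists>W lam. unitary_mat n W \<and> A = W * diag_fun_mat n (\<lambda>i. complex_of_real (lam i)) * adj W"
proof -
  obtain W lam where Wu: "unitary_mat n W" and ev: "\<forall>i<n. A *\<^sub>v col W i = lam i \<cdot>\<^sub>v col W i"
    using hermitian_eigenbasis[OF A herm] by blast
  note W = unitary_matD[OF Wu]
  define D where "D = diag_fun_mat n lam"
  have AW: "A * W = W * D"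
  proof (rule eq_matI)
    fix r i assume "r < dim_row (W * D)" "i < dim_col (W * D)"
    hence ri: "r < n" "i < n" using W(1) by (auto simp: D_def)
    have "(A * W) $$ (r,i) = (A *\<^sub>v col W i) $ r" using A W(1) ri by simp
    thus "(A * W) $$ (r,i) = (W * D) $$ (r,i)"
      using ev ri W(1) index_mult_diag_fun_mat_right[OF W(1) ri] unfolding D_def
      by (simp add: mult.commute)
  qed (use A W(1) in \<open>simp_all add: D_def\<close>)
  have "A = (A * W) * adj W"
    using unitary_mat_cancel(3)[OF Wu, of A] A W(1) by (simp add: assoc_mult_mat_dims)
  hence A_eq: "A = W * D * adj W" unfolding AW .
  have "D = adj W * A * W"
    unfolding A_eq using W unitary_mat_cancel(1,2)[OF Wu] by (simp add: assoc_mult_mat_dims D_def)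
  hence "adj D = D" using A W(1) herm by (simp add: adj_sandwich)
  have "lam i = complex_of_real (Re (lam i))" if "i < n" for i
  proof -
    have "adj D $$ (i,i) = D $$ (i,i)" using \<open>adj D = D\<close> by simp
    hence "cnj (lam i) = lam i" using that unfolding D_def by (simp add: diag_fun_mat_def)
    thus ?thesis by (metis Reals_cnj_iff of_real_Re)
  qed
  hence "D = diag_fun_mat n (\<lambda>i. complex_of_real (Re (lam i)))"
    unfolding D_def diag_fun_mat_def by (intro eq_matI) auto
  thus ?thesis using A_eq Wu by (intro exI[of _ W] exI[of _ "\<lambda>i. Re (lam i)"]) simp
qed

section \<open>Positive semidefinite matrices and their square roots\<close>

lemma psd_iff:
  "psd n A \<longleftrightarrow> A \<in> carrier_mat n n \<and> adj A = A \<and>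
     (\<forall>v \<in> carrier_vec n. 0 \<le> Re (cinner n (($) v) (($) (A *\<^sub>v v))))"
  unfolding psd_def cinner_def ..

lemma psdD:
  assumes "psd n A"
  shows "A \<in> carrier_mat n n" "adj A = A" "v \<in> carrier_vec n \<Longrightarrow> 0 \<le> Re (cinner n (($) v) (($) (A *\<^sub>v v)))"
  using assms unfolding psd_iff by auto

lemma cinner_mult_mat_vec:
  assumes "W \<in> carrier_mat n m" "v \<in> carrier_vec n" "z \<in> carrier_vec m"
  shows "cinner n (($) v) (($) (W *\<^sub>v z)) = cinner m (($) (adj W *\<^sub>v v)) (($) z)"
proof -
  have "cinner n (($) v) (($) (W *\<^sub>v z)) = (\<Sum>i<n. \<Sum>k<m. cnj (v $ i) * (W $$ (i,k) * z $ k))"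
    using assms unfolding cinner_def by (simp add: scalar_prod_def atLeast0LessThan sum_distrib_left)
  also have "\<dots> = (\<Sum>k<m. (\<Sum>i<n. cnj (v $ i) * W $$ (i,k)) * z $ k)"
    by (subst sum.swap) (simp add: sum_distrib_right mult.assoc)
  also have "\<dots> = cinner m (($) (adj W *\<^sub>v v)) (($) z)"
    using assms unfolding cinner_def by (simp add: scalar_prod_def atLeast0LessThan mult.commute)
  finally show ?thesis .
qed

lemma psd_congruence:
  assumes "psd n B" "W \<in> carrier_mat n n"
  shows "psd n (adj W * B * W)"
  unfolding psd_iff
proof (intro conjI ballI)
  note B = psdD(1,2)[OF assms(1)]
  show "adj W * B * W \<in> carrier_mat n n" using B assms(2) by auto
  show "adj (adj W * B * W) = adj W * B * W" using B assms(2) by (simp add: adj_sandwich)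
  fix v :: "complex vec" assume v: "v \<in> carrier_vec n"
  have "(adj W * B * W) *\<^sub>v v = adj W *\<^sub>v (B *\<^sub>v (W *\<^sub>v v))"
    using B assms(2) v by (simp add: assoc_mult_mat_vec_dims)
  hence "cinner n (($) v) (($) ((adj W * B * W) *\<^sub>v v)) = cinner n (($) (W *\<^sub>v v)) (($) (B *\<^sub>v (W *\<^sub>v v)))"
    using cinner_mult_mat_vec[of "adj W" n n v "B *\<^sub>v (W *\<^sub>v v)"] B assms(2) v by simp
  thus "0 \<le> Re (cinner n (($) v) (($) ((adj W * B * W) *\<^sub>v v)))"
    using psdD(3)[OF assms(1)] assms(2) v by simp
qed

lemma psd_rank_one: "psd n (mat n n (\<lambda>(i,j). w i * cnj (w j)))"
  unfolding psd_iff
proof (intro conjI ballI)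
  show "adj (mat n n (\<lambda>(i,j). w i * cnj (w j))) = mat n n (\<lambda>(i,j). w i * cnj (w j))"
    by (rule eq_matI) auto
  fix v :: "complex vec" assume v: "v \<in> carrier_vec n"
  define s where "s = (\<Sum>j<n. cnj (w j) * v $ j)"
  have "cinner n (($) v) (($) (mat n n (\<lambda>(i,j). w i * cnj (w j)) *\<^sub>v v)) = (\<Sum>i<n. cnj (v $ i) * (w i * s))"
    using v unfolding cinner_def s_def
    by (intro sum.cong refl) (simp add: scalar_prod_def atLeast0LessThan sum_distrib_left mult.assoc)
  also have "\<dots> = cnj s * s"
    unfolding s_def by (simp add: sum_distrib_right mult.assoc mult.commute mult.left_commute)
  finally show "0 \<le> Re (cinner n (($) v) (($) (mat n n (\<lambda>(i,j). w i * cnj (w j)) *\<^sub>v v)))"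
    by (simp add: mult.commute complex_mult_cnj)
qed simp

lemma psd_reindex_involution:
  assumes A: "psd n A" and \<sigma>: "\<forall>i<n. \<sigma> i < n \<and> \<sigma> (\<sigma> i) = i"
  shows "psd n (mat n n (\<lambda>(i,j). A $$ (\<sigma> i, \<sigma> j)))"
  unfolding psd_iff
proof (intro conjI ballI)
  note Ac = psdD(1,2)[OF A]
  show "adj (mat n n (\<lambda>(i,j). A $$ (\<sigma> i, \<sigma> j))) = mat n n (\<lambda>(i,j). A $$ (\<sigma> i, \<sigma> j))"
    using \<sigma> hermitian_cnj_index[OF Ac(2,1)] by (intro eq_matI) auto
  fix v :: "complex vec" assume v: "v \<in> carrier_vec n"
  define u where "u = vec n (\<lambda>k. v $ \<sigma> k)"
  have u: "u \<in> carrier_vec n" unfolding u_def by simp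
  have "cinner n (($) v) (($) (mat n n (\<lambda>(i,j). A $$ (\<sigma> i, \<sigma> j)) *\<^sub>v v))
      = (\<Sum>i<n. cnj (u $ \<sigma> i) * (\<Sum>j<n. A $$ (\<sigma> i, \<sigma> j) * u $ \<sigma> j))"
    using v \<sigma> unfolding cinner_def u_def
    by (intro sum.cong refl) (simp add: scalar_prod_def atLeast0LessThan)
  also have "\<dots> = (\<Sum>i<n. cnj (u $ \<sigma> i) * (\<Sum>j<n. A $$ (\<sigma> i, j) * u $ j))"
    by (simp only: sum_lessThan_involution[OF \<sigma>, of "\<lambda>j. A $$ (_, j) * u $ j"])
  also have "\<dots> = (\<Sum>i<n. cnj (u $ i) * (\<Sum>j<n. A $$ (i, j) * u $ j))"
    by (rule sum_lessThan_involution[OF \<sigma>, of "\<lambda>i. cnj (u $ i) * (\<Sum>j<n. A $$ (i, j) * u $ j)"])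
  also have "\<dots> = cinner n (($) u) (($) (A *\<^sub>v u))"
    using Ac u unfolding cinner_def by (simp add: scalar_prod_def atLeast0LessThan)
  finally show "0 \<le> Re (cinner n (($) v) (($) (mat n n (\<lambda>(i,j). A $$ (\<sigma> i, \<sigma> j)) *\<^sub>v v)))"
    using psdD(3)[OF A u] by simp
qed simp

lemma cinner_diag_fun_mat_real:
  assumes "u \<in> carrier_vec n"
  shows "cinner n (($) u) (($) (diag_fun_mat n (\<lambda>i. complex_of_real (f i)) *\<^sub>v u))
    = complex_of_real (\<Sum>k<n. f k * (cmod (u $ k))\<^sup>2)"
proof -
  have "(diag_fun_mat n (\<lambda>i. complex_of_real (f i)) *\<^sub>v u) $ k = f k * u $ k" if "k < n" for k
    using index_diag_fun_mat_mult_vec[OF assms that] .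
  hence "cnj (u $ k) * (diag_fun_mat n (\<lambda>i. complex_of_real (f i)) *\<^sub>v u) $ k
      = complex_of_real (f k * (cmod (u $ k))\<^sup>2)" if "k < n" for k
    using that by (simp only: of_real_mult complex_norm_square) (simp add: mult.commute mult.left_commute)
  thus ?thesis unfolding cinner_def of_real_sum by (intro sum.cong) auto
qed

lemma cinner_unitary_diag:
  assumes "W \<in> carrier_mat n n" "v \<in> carrier_vec n"
  shows "cinner n (($) v) (($) ((W * diag_fun_mat n (\<lambda>i. complex_of_real (f i)) * adj W) *\<^sub>v v))
    = complex_of_real (\<Sum>k<n. f k * (cmod ((adj W *\<^sub>v v) $ k))\<^sup>2)"
proof -
  let ?D = "diag_fun_mat n (\<lambda>i. complex_of_real (f i))"
  define w where "w = adj W *\<^sub>v v"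
  have w: "w \<in> carrier_vec n" and Dw: "?D *\<^sub>v w \<in> carrier_vec n"
    unfolding w_def carrier_vec_def using assms by auto
  have "(W * ?D * adj W) *\<^sub>v v = W *\<^sub>v (?D *\<^sub>v w)"
    unfolding w_def using assms by (simp add: assoc_mult_mat_vec_dims)
  hence "cinner n (($) v) (($) ((W * ?D * adj W) *\<^sub>v v)) = cinner n (($) w) (($) (?D *\<^sub>v w))"
    using cinner_mult_mat_vec[OF assms Dw] unfolding w_def by simp
  thus ?thesis using cinner_diag_fun_mat_real[OF w, of f] unfolding w_def by simp
qed

lemma psd_unitary_diag_iff:
  assumes "unitary_mat n W"
  shows "psd n (W * diag_fun_mat n (\<lambda>i. complex_of_real (f i)) * adj W) \<longleftrightarrow> (\<forall>i<n. f i \<ge> 0)"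
proof
  note W = unitary_matD[OF assms]
  assume psd: "psd n (W * diag_fun_mat n (\<lambda>i. complex_of_real (f i)) * adj W)"
  show "\<forall>i<n. f i \<ge> 0"
  proof (intro allI impI)
    fix i assume i: "i < n"
    have "adj W *\<^sub>v col W i = unit_vec n i"
      using col_mult2[of "adj W" n n W n i] W i by simp
    hence "(\<Sum>k<n. f k * (cmod ((adj W *\<^sub>v col W i) $ k))\<^sup>2) = f i"
      using i by (simp add: unit_vec_def if_distrib[of "\<lambda>x. (cmod x)\<^sup>2"] if_distrib[of "\<lambda>x. _ * x"] cong: if_cong)
    thus "f i \<ge> 0"
      using psdD(3)[OF psd, of "col W i"] cinner_unitary_diag[OF W(1), of "col W i" f] W(1) i by simp
  qed
next
  note W = unitary_matD[OF assms]
  assume nonneg: "\<forall>i<n. f i \<ge> 0"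
  show "psd n (W * diag_fun_mat n (\<lambda>i. complex_of_real (f i)) * adj W)"
    unfolding psd_iff
  proof (intro conjI ballI)
    show "W * diag_fun_mat n (\<lambda>i. complex_of_real (f i)) * adj W \<in> carrier_mat n n" using W(1) by auto
    show "adj (W * diag_fun_mat n (\<lambda>i. complex_of_real (f i)) * adj W) = W * diag_fun_mat n (\<lambda>i. complex_of_real (f i)) * adj W"
      using adj_sandwich[of "adj W" "diag_fun_mat n (\<lambda>i. complex_of_real (f i))" "adj W"] W(1)
      by (simp add: adj_diag_fun_mat_real)
    fix v :: "complex vec" assume v: "v \<in> carrier_vec n"
    show "0 \<le> Re (cinner n (($) v) (($) ((W * diag_fun_mat n (\<lambda>i. complex_of_real (f i)) * adj W) *\<^sub>v v)))"
      unfolding cinner_unitary_diag[OF W(1) v] Re_complex_of_real using nonneg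
      by (intro sum_nonneg) simp
  qed
qed

lemma psd_spectral_decomposition:
  assumes "psd n A"
  shows "\<exists>W f. unitary_mat n W \<and> (\<forall>i<n. f i \<ge> 0) \<and> A = W * diag_fun_mat n (\<lambda>i. complex_of_real (f i)) * adj W"
  using hermitian_spectral_decomposition[OF psdD(1,2)[OF assms]] psd_unitary_diag_iff assms by metis

lemma hermitian_square_eq_zero:
  assumes C: "C \<in> carrier_mat n n" and herm: "adj C = C" and sq: "C * C = 0\<^sub>m n n"
  shows "C = 0\<^sub>m n n"
proof (rule eq_matI)
  fix l j assume "l < dim_row (0\<^sub>m n n :: complex mat)" "j < dim_col (0\<^sub>m n n :: complex mat)"
  hence lj: "l < n" "j < n" by auto
  have "cinner n (\<lambda>k. C $$ (k,j)) (\<lambda>k. C $$ (k,j)) = (C * C) $$ (j,j)"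
    using index_adj_mult_mat[OF C lj(2) lj(2)] herm by simp
  also have "\<dots> = 0" using sq lj by simp
  finally show "C $$ (l,j) = 0\<^sub>m n n $$ (l,j)" using lj cinner_self_eq_0_iff by auto
qed (use C in auto)

lemma commute_diag_fun_mat_comp:
  assumes B: "B \<in> carrier_mat n n" and comm: "B * diag_fun_mat n f = diag_fun_mat n f * B"
  shows "B * diag_fun_mat n (\<lambda>i. g (f i)) = diag_fun_mat n (\<lambda>i. g (f i)) * B"
proof (rule eq_matI)
  fix i j assume "i < dim_row (diag_fun_mat n (\<lambda>i. g (f i)) * B)"
      "j < dim_col (diag_fun_mat n (\<lambda>i. g (f i)) * B)"
  hence ij: "i < n" "j < n" using B by auto
  have "B $$ (i,j) * f j = f i * B $$ (i,j)"
    using arg_cong[OF comm, of "\<lambda>M. M $$ (i,j)"]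
    by (simp add: index_mult_diag_fun_mat_right[OF B ij] index_mult_diag_fun_mat_left[OF B ij])
  hence "B $$ (i,j) * g (f j) = g (f i) * B $$ (i,j)"
    by (cases "B $$ (i,j) = 0") (auto simp: mult.commute)
  thus "(B * diag_fun_mat n (\<lambda>i. g (f i))) $$ (i,j) = (diag_fun_mat n (\<lambda>i. g (f i)) * B) $$ (i,j)"
    by (simp add: index_mult_diag_fun_mat_right[OF B ij] index_mult_diag_fun_mat_left[OF B ij])
qed (use B in auto)

text \<open>Both quadratic forms are nonnegative, so a vector killed by \<open>B + D\<close> is isotropic for \<open>D\<close>,
  hence killed by the nonnegative diagonal \<open>D\<close>, hence also by \<open>B\<close>.\<close>

lemma psd_plus_diag_kernel:
  assumes B: "psd n B" and nonneg: "\<forall>i<n. g i \<ge> 0" and c: "c \<in> carrier_vec n"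
    and ker: "(B + diag_fun_mat n (\<lambda>i. complex_of_real (g i))) *\<^sub>v c = 0\<^sub>v n"
  shows "diag_fun_mat n (\<lambda>i. complex_of_real (g i)) *\<^sub>v c = 0\<^sub>v n" "B *\<^sub>v c = 0\<^sub>v n"
proof -
  let ?D = "diag_fun_mat n (\<lambda>i. complex_of_real (g i))"
  note Bc = psdD(1)[OF B]
  have sum: "B *\<^sub>v c + ?D *\<^sub>v c = 0\<^sub>v n"
    using ker add_mult_distrib_mat_vec[OF Bc _ c, of ?D] by simp
  have "cinner n (($) c) (($) (B *\<^sub>v c)) + cinner n (($) c) (($) (?D *\<^sub>v c))
      = cinner n (($) c) (($) (B *\<^sub>v c + ?D *\<^sub>v c))"
    using Bc c by (subst cinner_cong[of n _ _ _ "\<lambda>k. (B *\<^sub>v c) $ k + (?D *\<^sub>v c) $ k"])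
      (auto simp: cinner_add_right)
  also have "\<dots> = 0" unfolding sum cinner_def by simp
  finally have "Re (cinner n (($) c) (($) (B *\<^sub>v c))) + (\<Sum>k<n. g k * (cmod (c $ k))\<^sup>2) = 0"
    using cinner_diag_fun_mat_real[OF c, of g]
    by (metis Re_complex_of_real plus_complex.sel(1) zero_complex.sel(1))
  moreover have "0 \<le> Re (cinner n (($) c) (($) (B *\<^sub>v c)))" using psdD(3)[OF B c] .
  moreover have terms: "\<forall>k<n. 0 \<le> g k * (cmod (c $ k))\<^sup>2" using nonneg by simp
  ultimately have "(\<Sum>k<n. g k * (cmod (c $ k))\<^sup>2) = 0"
    using sum_nonneg[of "{..<n}" "\<lambda>k. g k * (cmod (c $ k))\<^sup>2"] by auto
  hence "\<forall>k<n. g k * (cmod (c $ k))\<^sup>2 = 0" using terms by (subst (asm) sum_nonneg_eq_0_iff) auto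
  hence "(?D *\<^sub>v c) $ k = 0" if "k < n" for k
    using index_diag_fun_mat_mult_vec[OF c that] that by auto
  thus D0: "?D *\<^sub>v c = 0\<^sub>v n" using c by (intro eq_vecI) auto
  show "B *\<^sub>v c = 0\<^sub>v n" using sum Bc c unfolding D0 by simp
qed

text \<open>With \<open>C = B - D\<close>, commutativity gives \<open>(B + D) C = B\<^sup>2 - D\<^sup>2 = 0\<close>; by
  \<open>psd_plus_diag_kernel\<close> then \<open>B C = D C = 0\<close>, so \<open>C\<^sup>2 = 0\<close> and the Hermitian \<open>C\<close> vanishes.\<close>

lemma psd_eq_diag_if_commuting_squares:
  assumes B: "psd n B" and nonneg: "\<forall>i<n. g i \<ge> 0"
    and comm: "B * diag_fun_mat n (\<lambda>i. complex_of_real (g i)) = diag_fun_mat n (\<lambda>i. complex_of_real (g i)) * B"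
    and sq: "B * B = diag_fun_mat n (\<lambda>i. complex_of_real (g i)) * diag_fun_mat n (\<lambda>i. complex_of_real (g i))"
  shows "B = diag_fun_mat n (\<lambda>i. complex_of_real (g i))"
proof -
  define D where "D = diag_fun_mat n (\<lambda>i. complex_of_real (g i))"
  note Bc = psdD(1)[OF B]
  have Dc: "D \<in> carrier_mat n n" unfolding D_def by simp
  define C where "C = B - D"
  have Cc: "C \<in> carrier_mat n n" unfolding C_def using minus_carrier_mat[OF Dc] .
  have "(B + D) * C = (B * B + D * B) - (B * D + D * D)"
    unfolding C_def using Bc Dc
    by (simp add: add_mult_distrib_mat[of _ n n] mult_minus_distrib_mat[of _ n n])
  also have "\<dots> = 0\<^sub>m n n"
    unfolding comm[folded D_def] sq[folded D_def] using Bc Dc by (intro eq_matI) auto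
  finally have PC: "(B + D) * C = 0\<^sub>m n n" .
  have kernel: "D *\<^sub>v col C j = 0\<^sub>v n \<and> B *\<^sub>v col C j = 0\<^sub>v n" if "j < n" for j
  proof -
    have "(B + D) *\<^sub>v col C j = col ((B + D) * C) j"
      using Bc Dc Cc that by (simp add: col_mult2[of _ n n _ n])
    hence "(B + D) *\<^sub>v col C j = 0\<^sub>v n" unfolding PC using that by (intro eq_vecI) auto
    thus ?thesis using psd_plus_diag_kernel[OF B nonneg, of "col C j"] Cc that unfolding D_def by auto
  qed
  have "C * C = B * C - D * C" using minus_mult_distrib_mat[OF Bc Dc Cc] unfolding C_def[symmetric] .
  also have "\<dots> = 0\<^sub>m n n"
    using mult_mat_eq_zero_if_cols[OF Bc Cc] mult_mat_eq_zero_if_cols[OF Dc Cc] kernel by simp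
  finally have "C = 0\<^sub>m n n"
    using hermitian_square_eq_zero[OF Cc] psdD(2)[OF B] Bc Dc adj_minus[OF Bc Dc]
    unfolding C_def D_def by (simp add: adj_diag_fun_mat_real)
  show ?thesis unfolding D_def[symmetric]
  proof (rule eq_matI)
    fix i j assume "i < dim_row D" "j < dim_col D"
    thus "B $$ (i,j) = D $$ (i,j)"
      using arg_cong[OF \<open>C = 0\<^sub>m n n\<close>, of "\<lambda>M. M $$ (i,j)"] Bc Dc unfolding C_def by simp
  qed (use Bc Dc in auto)
qed

lemma psd_sqrt_ex1:
  assumes "psd n A"
  shows "\<exists>!B. psd n B \<and> B * B = A"
proof -
  obtain W f where Wu: "unitary_mat n W" and nonneg: "\<forall>i<n. f i \<ge> 0"
    and A: "A = W * diag_fun_mat n (\<lambda>i. complex_of_real (f i)) * adj W"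
    using psd_spectral_decomposition[OF assms] by blast
  note W = unitary_matD[OF Wu]
  let ?D = "diag_fun_mat n (\<lambda>i. complex_of_real (f i))"
  let ?R = "diag_fun_mat n (\<lambda>i. complex_of_real (sqrt (f i)))"
  have RR: "?R * ?R = ?D"
    unfolding diag_fun_mat_mult using nonneg
    by (intro eq_matI) (auto simp: diag_fun_mat_def simp flip: of_real_mult)
  define S where "S = W * ?R * adj W"
  have "psd n S" unfolding S_def psd_unitary_diag_iff[OF Wu] using nonneg by simp
  moreover have "S * S = A" unfolding S_def A using unitary_sandwich_mult[OF Wu] RR by simp
  moreover have "B = S" if B: "psd n B" "B * B = A" for B
  proof -
    define B' where "B' = adj W * B * W"
    have psd': "psd n B'" unfolding B'_def using psd_congruence[OF B(1) W(1)] .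
    note B'c = psdD(1)[OF psd']
    have B'B': "B' * B' = ?D"
      using unitary_sandwich_mult[OF unitary_mat_adj[OF Wu] psdD(1)[OF B(1)] psdD(1)[OF B(1)]]
        unitary_sandwich_cancel[OF Wu] B(2) unfolding A B'_def by simp
    have "B' * ?D = ?D * B'" unfolding B'B'[symmetric] using B'c by (simp add: assoc_mult_mat_dims)
    hence "B' * ?R = ?R * B'"
      using commute_diag_fun_mat_comp[OF B'c, of "\<lambda>i. complex_of_real (f i)" "\<lambda>z. complex_of_real (sqrt (Re z))"]
      by simp
    hence "B' = ?R" using psd_eq_diag_if_commuting_squares[OF psd', of "\<lambda>i. sqrt (f i)"] B'B' RR nonneg
      by simp
    thus "B = S"
      using unitary_sandwich_cancel[OF unitary_mat_adj[OF Wu] psdD(1)[OF B(1)]] unfolding S_def B'_def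
      by simp
  qed
  ultimately show ?thesis by blast
qed

lemma psd_sqrt:
  assumes "psd n A"
  shows "psd n (psd_sqrt n A)" "psd_sqrt n A * psd_sqrt n A = A"
  using theI'[OF psd_sqrt_ex1[OF assms]] unfolding psd_sqrt_def by auto

section \<open>Unitary freedom in factorisations\<close>

lemma unitary_factor_of_adj_mult_diag:
  assumes T: "T \<in> carrier_mat n n"
    and TT: "adj T * T = diag_fun_mat n (\<lambda>i. complex_of_real (\<sigma> i)) * diag_fun_mat n (\<lambda>i. complex_of_real (\<sigma> i))"
  shows "\<exists>Q. unitary_mat n Q \<and> T = Q * diag_fun_mat n (\<lambda>i. complex_of_real (\<sigma> i))"
proof -
  let ?\<Sigma> = "diag_fun_mat n (\<lambda>i. complex_of_real (\<sigma> i))"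
  have cols: "cinner n (\<lambda>r. T $$ (r,i)) (\<lambda>r. T $$ (r,j)) = (if i = j then complex_of_real ((\<sigma> i)\<^sup>2) else 0)"
    if "i < n" "j < n" for i j
  proof -
    have "cinner n (\<lambda>r. T $$ (r,i)) (\<lambda>r. T $$ (r,j)) = (adj T * T) $$ (i,j)"
      using index_adj_mult_mat[OF T that] by simp
    thus ?thesis unfolding TT diag_fun_mat_mult using that
      by (simp add: diag_fun_mat_def power2_eq_square)
  qed
  define I where "I = {i. i < n \<and> \<sigma> i \<noteq> 0}"
  define f where "f i r = T $$ (r,i) / complex_of_real (\<sigma> i)" for i r
  have "orthonormal_fam n I f"
    unfolding orthonormal_fam_def
  proof (intro ballI)
    fix i j assume "i \<in> I" "j \<in> I"
    thus "cinner n (f i) (f j) = (if i = j then 1 else 0)"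
      using cols[of i j] unfolding I_def f_def cinner_def
      by (simp add: sum_divide_distrib[symmetric] power2_eq_square)
  qed
  then obtain Q where Q: "unitary_mat n Q" "\<forall>i\<in>I. \<forall>r<n. Q $$ (r,i) = f i r"
    using orthonormal_fam_extend_unitary[of I n f] unfolding I_def by auto
  have "T = Q * ?\<Sigma>"
  proof (rule eq_matI)
    fix r i assume "r < dim_row (Q * ?\<Sigma>)" "i < dim_col (Q * ?\<Sigma>)"
    hence ri: "r < n" "i < n" using unitary_matD(1)[OF Q(1)] by auto
    have "\<sigma> i = 0 \<Longrightarrow> T $$ (r,i) = 0" using cols[of i i] ri cinner_self_eq_0_iff by auto
    thus "T $$ (r,i) = (Q * ?\<Sigma>) $$ (r,i)"
      using Q(2) ri index_mult_diag_fun_mat_right[OF unitary_matD(1)[OF Q(1)] ri]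
      unfolding I_def f_def by (cases "\<sigma> i = 0") auto
  qed (use T unitary_matD(1)[OF Q(1)] in auto)
  thus ?thesis using Q(1) by blast
qed

text \<open>Diagonalise \<open>S = V \<Sigma> V\<^sup>\<dagger>\<close>; then \<open>T = Y\<^sup>\<dagger> V\<close> satisfies \<open>T\<^sup>\<dagger> T = \<Sigma>\<^sup>2\<close>, so
  \<open>T = Q \<Sigma>\<close> with \<open>Q\<close> unitary and \<open>Y = V \<Sigma> Q\<^sup>\<dagger> = S (V Q\<^sup>\<dagger>)\<close>.\<close>

lemma unitary_freedom_hermitian:
  assumes S: "S \<in> carrier_mat n n" and herm: "adj S = S" and Y: "Y \<in> carrier_mat n n"
    and YY: "Y * adj Y = S * S"
  shows "\<exists>Z. unitary_mat n Z \<and> Y = S * Z"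
proof -
  obtain V \<sigma> where Vu: "unitary_mat n V"
    and S_eq: "S = V * diag_fun_mat n (\<lambda>i. complex_of_real (\<sigma> i)) * adj V"
    using hermitian_spectral_decomposition[OF S herm] by blast
  let ?\<Sigma> = "diag_fun_mat n (\<lambda>i. complex_of_real (\<sigma> i))"
  note V = unitary_matD[OF Vu]
  define T where "T = adj Y * V"
  have T: "T \<in> carrier_mat n n" and adjT: "adj T = adj V * Y"
    unfolding T_def using Y V(1) by (auto simp: adj_mult)
  have "adj T * T = adj V * (Y * adj Y) * V"
    unfolding adjT unfolding T_def using Y V(1) by (simp add: assoc_mult_mat_dims)
  also have "\<dots> = ?\<Sigma> * ?\<Sigma>"
    unfolding YY S_eq unitary_sandwich_mult[OF Vu diag_fun_mat_carrier diag_fun_mat_carrier]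
    by (rule unitary_sandwich_cancel[OF Vu], rule mult_carrier_mat) auto
  finally obtain Q where Qu: "unitary_mat n Q" and TQ: "T = Q * ?\<Sigma>"
    using unitary_factor_of_adj_mult_diag[OF T] by blast
  note Q = unitary_matD[OF Qu]
  have "Y = V * adj T" unfolding adjT using unitary_mat_cancel(1)[OF Vu] Y by simp
  also have "\<dots> = V * (?\<Sigma> * adj Q)"
    unfolding TQ using Q(1) by (simp add: adj_mult adj_diag_fun_mat_real)
  also have "\<dots> = S * (V * adj Q)"
    unfolding S_eq using V(1) Q(1) unitary_mat_cancel(2)[OF Vu] by (simp add: assoc_mult_mat_dims)
  finally show ?thesis using unitary_mat_mult[OF Vu unitary_mat_adj[OF Qu]] by blast
qed

section \<open>The channel with process matrix \<open>\<chi>\<close>\<close>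

lemma Et_carrier [simp]: "Et d i \<in> carrier_mat d d"
  unfolding Et_def by simp

lemma dim_Et [simp]: "dim_row (Et d i) = d" "dim_col (Et d i) = d"
  unfolding Et_def by simp_all

lemma index_Et: "r < d \<Longrightarrow> c < d \<Longrightarrow> Et d i $$ (r,c) = (if r = i div d \<and> c = i mod d then 1 else 0)"
  unfolding Et_def by simp

lemma index_Et_mult:
  assumes "\<rho> \<in> carrier_mat d d" "b < d" "c < d"
  shows "(Et d i * \<rho>) $$ (b,c) = (if b = i div d then \<rho> $$ (i mod d, c) else 0)"
proof -
  have "(Et d i * \<rho>) $$ (b,c) = (\<Sum>k<d. Et d i $$ (b,k) * \<rho> $$ (k,c))"
    using assms by (simp add: scalar_prod_def atLeast0LessThan)
  also have "\<dots> = (\<Sum>k<d. if k = i mod d then (if b = i div d then \<rho> $$ (k,c) else 0) else 0)"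
    using assms(2) by (intro sum.cong) (auto simp: index_Et)
  finally show ?thesis using assms(2) by simp
qed

lemma index_Et_sandwich:
  assumes "\<rho> \<in> carrier_mat d d" "b < d" "b' < d"
  shows "(Et d i * \<rho> * adj (Et d j)) $$ (b,b') = (if b = i div d \<and> b' = j div d then \<rho> $$ (i mod d, j mod d) else 0)"
proof -
  have "(Et d i * \<rho> * adj (Et d j)) $$ (b,b') = (\<Sum>c<d. (Et d i * \<rho>) $$ (b,c) * cnj (Et d j $$ (b',c)))"
    using assms by (simp add: scalar_prod_def atLeast0LessThan)
  also have "\<dots> = (\<Sum>c<d. if c = j mod d then (if b = i div d \<and> b' = j div d then \<rho> $$ (i mod d, c) else 0) else 0)"
    using assms by (intro sum.cong) (auto simp: index_Et_mult index_Et simp del: index_mult_mat)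
  finally show ?thesis using assms(2) by simp
qed

lemma mtrace_Et_sandwich:
  assumes "\<rho> \<in> carrier_mat d d" "j < d*d"
  shows "mtrace (Et d j * \<rho> * adj (Et d k)) = (if j div d = k div d then \<rho> $$ (j mod d, k mod d) else 0)"
proof -
  have "j div d < d" using div_mod_less_of_less_square[OF assms(2)] by simp
  moreover have "mtrace (Et d j * \<rho> * adj (Et d k))
      = (\<Sum>r<d. if r = j div d then (if j div d = k div d then \<rho> $$ (j mod d, k mod d) else 0) else 0)"
    unfolding mtrace_def using assms(1)
    by (intro sum.cong) (auto simp: index_Et_sandwich simp del: index_mult_mat(1))
  ultimately show ?thesis by simp
qed

lemma index_rho_tilde:
  assumes "\<rho> \<in> carrier_mat d d" "x < d" "a < d" "y < d" "a' < d"
  shows "rho_tilde d \<rho> $$ (x*d+a, y*d+a') = (if x = y then \<rho> $$ (a,a') else 0)"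
  using assms mult_add_less_mult[of x d a d] mult_add_less_mult[of y d a' d]
  unfolding rho_tilde_def by (simp add: mtrace_Et_sandwich power2_eq_square)

lemma index_chi_channel:
  assumes "\<rho> \<in> carrier_mat d d" "b < d" "b' < d"
  shows "chi_channel d \<chi> \<rho> $$ (b,b') = (\<Sum>a<d. \<Sum>a'<d. \<rho> $$ (a,a') * \<chi> $$ (b*d+a, b'*d+a'))"
proof -
  have "chi_channel d \<chi> \<rho> $$ (b,b') = (\<Sum>i<d*d. \<Sum>j<d*d. (Et d i * \<rho> * adj (Et d j)) $$ (b,b') * \<chi> $$ (i,j))"
    unfolding chi_channel_def using assms(2,3) by (simp add: power2_eq_square)
  also have "\<dots> = (\<Sum>x<d. \<Sum>a<d. \<Sum>y<d. \<Sum>a'<d.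
      if x = b then (if y = b' then \<rho> $$ (a,a') * \<chi> $$ (x*d+a, y*d+a') else 0) else 0)"
    unfolding sum_lessThan_mult using assms
    by (intro sum.cong refl) (auto simp: index_Et_sandwich simp del: index_mult_mat)
  also have "\<dots> = (\<Sum>a<d. \<Sum>a'<d. \<rho> $$ (a,a') * \<chi> $$ (b*d+a, b'*d+a'))"
    using assms(2,3) by (simp add: sum_if_cond)
  finally show ?thesis .
qed

lemma chi_channel_Et:
  assumes "a < d" "a' < d" "b < d" "b' < d"
  shows "chi_channel d \<chi> (Et d (a*d+a')) $$ (b,b') = \<chi> $$ (b*d+a, b'*d+a')"
proof -
  have "chi_channel d \<chi> (Et d (a*d+a')) $$ (b,b') =
      (\<Sum>x<d. \<Sum>x'<d. if x = a then (if x' = a' then \<chi> $$ (b*d+x, b'*d+x') else 0) else 0)"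
    unfolding index_chi_channel[OF Et_carrier assms(3,4)] using assms
    by (intro sum.cong refl) (auto simp: index_Et)
  thus ?thesis using assms by (simp add: sum.If_cases)
qed

lemma dim_chi_channel [simp]: "dim_row (chi_channel d \<chi> \<rho>) = d" "dim_col (chi_channel d \<chi> \<rho>) = d"
  unfolding chi_channel_def by simp_all

lemma chi_trace_condition:
  assumes QC: "quantum_channel d d (chi_channel d \<chi>)" and "a < d" "a' < d"
  shows "(\<Sum>b<d. \<chi> $$ (b*d+a, b*d+a')) = (if a = a' then 1 else 0)"
proof -
  have "(\<Sum>b<d. \<chi> $$ (b*d+a, b*d+a')) = mtrace (chi_channel d \<chi> (Et d (a*d+a')))"
    unfolding mtrace_def dim_chi_channel using assms(2,3) by (simp add: chi_channel_Et)
  also have "\<dots> = mtrace (Et d (a*d+a'))"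
    using QC unfolding quantum_channel_def by simp
  also have "\<dots> = (\<Sum>b<d. if b = a then (if a = a' then 1 else 0) else 0)"
    unfolding mtrace_def using assms(2,3) by (intro sum.cong) (auto simp: index_Et)
  finally show ?thesis using assms(2) by simp
qed

text \<open>Choi's argument: applying \<open>id \<otimes> \<E>\<close> to the maximally entangled projector yields \<open>\<chi>\<close>
  up to the swap of tensor factors.\<close>

lemma chi_psd:
  assumes chi: "\<chi> \<in> carrier_mat (d*d) (d*d)" and QC: "quantum_channel d d (chi_channel d \<chi>)"
  shows "psd (d*d) \<chi>"
proof -
  define w where "w p = (if p div d = p mod d then 1 else 0 :: complex)" for p
  define X where "X = mat (d*d) (d*d) (\<lambda>(p,q). w p * cnj (w q))"
  define C where "C = ampl d d d (chi_channel d \<chi>) X"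
  have C: "psd (d*d) C"
    using QC psd_rank_one[of "d*d" w] unfolding quantum_channel_def X_def C_def by blast
  define \<sigma> where "\<sigma> r = (r mod d)*d + r div d" for r
  have \<sigma>_div_mod: "\<sigma> i div d = i mod d" "\<sigma> i mod d = i div d" "\<sigma> i < d*d" if "i < d*d" for i
  proof -
    note div_mod_less_of_less_square[OF that]
    thus "\<sigma> i div d = i mod d" "\<sigma> i mod d = i div d" "\<sigma> i < d*d"
      unfolding \<sigma>_def using mult_add_less_mult by auto
  qed
  have \<sigma>: "\<forall>i<d*d. \<sigma> i < d*d \<and> \<sigma> (\<sigma> i) = i"
    using \<sigma>_div_mod by (simp add: \<sigma>_def)
  have blk: "blk d X x y = Et d (x*d+y)" if "x < d" "y < d" for x y
    using that unfolding blk_def X_def w_def by (intro eq_matI) (auto simp: index_Et mult_add_less_mult)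
  have "\<chi> = mat (d*d) (d*d) (\<lambda>(i,j). C $$ (\<sigma> i, \<sigma> j))"
  proof (rule eq_matI)
    fix i j assume "i < dim_row (mat (d*d) (d*d) (\<lambda>(i,j). C $$ (\<sigma> i, \<sigma> j)))"
      "j < dim_col (mat (d*d) (d*d) (\<lambda>(i,j). C $$ (\<sigma> i, \<sigma> j)))"
    hence ij: "i < d*d" "j < d*d" by auto
    note lt = div_mod_less_of_less_square[OF ij(1)] div_mod_less_of_less_square[OF ij(2)]
    have "C $$ (\<sigma> i, \<sigma> j) = chi_channel d \<chi> (Et d (i mod d * d + j mod d)) $$ (i div d, j div d)"
      unfolding C_def ampl_def using ij \<sigma>_div_mod[OF ij(1)] \<sigma>_div_mod[OF ij(2)] blk lt by simp
    also have "\<dots> = \<chi> $$ (i, j)" using chi_channel_Et lt by simp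
    finally show "\<chi> $$ (i,j) = mat (d*d) (d*d) (\<lambda>(i,j). C $$ (\<sigma> i, \<sigma> j)) $$ (i,j)" using ij by simp
  qed (use chi in auto)
  thus ?thesis using psd_reindex_involution[OF C \<sigma>] by simp
qed

section \<open>Isometric extensions and the complementary channel\<close>

definition sqrt_dilation :: "nat \<Rightarrow> complex mat \<Rightarrow> complex mat" where
  "sqrt_dilation d S = mat (d*(d*d)) d (\<lambda>(p,a). S $$ ((p div (d*d))*d + a, p mod (d*d)))"

lemma index_sqrt_dilation:
  assumes "b < d" "e < d*d" "a < d"
  shows "sqrt_dilation d S $$ (b*(d*d)+e, a) = S $$ (b*d+a, e)"
  using assms mult_add_less_mult[OF assms(1,2)] unfolding sqrt_dilation_def by simp

lemma sqrt_dilation_isometry: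
  assumes S: "S \<in> carrier_mat (d*d) (d*d)" and herm: "adj S = S"
    and QC: "quantum_channel d d (chi_channel d (S * S))"
  shows "adj (sqrt_dilation d S) * sqrt_dilation d S = 1\<^sub>m d"
proof (rule eq_matI)
  fix a a' assume "a < dim_row (1\<^sub>m d :: complex mat)" "a' < dim_col (1\<^sub>m d :: complex mat)"
  hence aa: "a < d" "a' < d" by auto
  have "(adj (sqrt_dilation d S) * sqrt_dilation d S) $$ (a,a')
      = (\<Sum>b<d. \<Sum>e<d*d. cnj (S $$ (b*d+a, e)) * S $$ (b*d+a', e))"
    using aa index_sqrt_dilation
    by (simp add: sqrt_dilation_def scalar_prod_def atLeast0LessThan sum_lessThan_mult)
  also have "\<dots> = (\<Sum>b<d. (S * S) $$ (b*d+a', b*d+a))"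
    using index_hermitian_square[OF S herm] mult_add_less_mult aa
    by (intro sum.cong refl) (simp add: mult.commute)
  also have "\<dots> = 1\<^sub>m d $$ (a,a')" using chi_trace_condition[OF QC aa(2,1)] aa by auto
  finally show "(adj (sqrt_dilation d S) * sqrt_dilation d S) $$ (a,a') = 1\<^sub>m d $$ (a,a')" .
qed (auto simp: sqrt_dilation_def)

lemma chi_channel_sqrt_dilation:
  assumes S: "S \<in> carrier_mat (d*d) (d*d)" and herm: "adj S = S" and \<rho>: "\<rho> \<in> carrier_mat d d"
  shows "chi_channel d (S * S) \<rho> = ptrace_env d (d*d) (sqrt_dilation d S * \<rho> * adj (sqrt_dilation d S))"
proof (rule eq_matI)
  define U where "U = sqrt_dilation d S"
  have U: "U \<in> carrier_mat (d*(d*d)) d" unfolding U_def sqrt_dilation_def by simp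
  fix b b' assume "b < dim_row (ptrace_env d (d*d) (U * \<rho> * adj U))"
      "b' < dim_col (ptrace_env d (d*d) (U * \<rho> * adj U))"
  hence bb: "b < d" "b' < d" unfolding ptrace_env_def by auto
  have "ptrace_env d (d*d) (U * \<rho> * adj U) $$ (b,b')
      = (\<Sum>e<d*d. \<Sum>a<d. \<Sum>a'<d. S $$ (b*d+a, e) * \<rho> $$ (a,a') * cnj (S $$ (b'*d+a', e)))"
    unfolding ptrace_env_def U_def
    using index_sandwich[OF U \<rho> U] mult_add_less_mult bb index_sqrt_dilation
    by (simp add: U_def)
  also have "\<dots> = (\<Sum>a<d. \<Sum>a'<d. \<rho> $$ (a,a') * (\<Sum>e<d*d. S $$ (b*d+a, e) * cnj (S $$ (b'*d+a', e))))"
    by (simp add: sum.swap[of _ "{..<d*d}"] sum_distrib_left mult.commute mult.left_commute)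
  also have "\<dots> = chi_channel d (S * S) \<rho> $$ (b,b')"
    using index_chi_channel[OF \<rho> bb] index_hermitian_square[OF S herm] mult_add_less_mult bb by simp
  finally show "chi_channel d (S * S) \<rho> $$ (b,b') = ptrace_env d (d*d) (U * \<rho> * adj U) $$ (b,b')"
    by simp
qed (simp_all add: ptrace_env_def)

lemma isometric_extension_sqrt_dilation:
  assumes "S \<in> carrier_mat (d*d) (d*d)" "adj S = S" "quantum_channel d d (chi_channel d (S * S))"
  shows "isometric_extension d d (d*d) (chi_channel d (S * S)) (sqrt_dilation d S)"
  using sqrt_dilation_isometry[OF assms] chi_channel_sqrt_dilation[OF assms(1,2)]
  unfolding isometric_extension_def sqrt_dilation_def by auto

text \<open>Column \<open>e\<close> of \<open>kraus_mat d U\<close> is the vectorised Kraus operator \<open>\<langle>e|U\<close>: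
  its entry at \<open>(b*d+a, e)\<close> is \<open>\<langle>b,e|U|a\<rangle>\<close>.\<close>

definition kraus_mat :: "nat \<Rightarrow> complex mat \<Rightarrow> complex mat" where
  "kraus_mat d U = mat (d*d) (d*d) (\<lambda>(p,e). U $$ ((p div d)*(d*d) + e, p mod d))"

lemma kraus_mat_carrier [simp]: "kraus_mat d U \<in> carrier_mat (d*d) (d*d)"
  unfolding kraus_mat_def by simp

lemma dim_kraus_mat [simp]: "dim_row (kraus_mat d U) = d*d" "dim_col (kraus_mat d U) = d*d"
  unfolding kraus_mat_def by simp_all

lemma index_kraus_mat:
  assumes "b < d" "a < d" "e < d*d"
  shows "kraus_mat d U $$ (b*d+a, e) = U $$ (b*(d*d)+e, a)"
  using assms mult_add_less_mult[OF assms(1,2)] unfolding kraus_mat_def by simp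

lemma index_sandwich_Et:
  assumes "U \<in> carrier_mat m d" "a < d" "a' < d" "p < m" "q < m"
  shows "(U * Et d (a*d+a') * adj U) $$ (p,q) = U $$ (p,a) * cnj (U $$ (q,a'))"
proof -
  have "(U * Et d (a*d+a') * adj U) $$ (p,q)
      = (\<Sum>x<d. \<Sum>x'<d. if x = a then (if x' = a' then U $$ (p,x) * cnj (U $$ (q,x')) else 0) else 0)"
    unfolding index_sandwich[OF assms(1) Et_carrier assms(1,4,5)] using assms(2,3)
    by (intro sum.cong refl) (auto simp: index_Et)
  thus ?thesis using assms(2,3) by (simp add: sum.If_cases)
qed

lemma kraus_mat_mult_adj:
  assumes iso: "isometric_extension d d (d*d) (chi_channel d \<chi>) U"
    and chi: "\<chi> \<in> carrier_mat (d*d) (d*d)"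
  shows "kraus_mat d U * adj (kraus_mat d U) = \<chi>"
proof (rule eq_matI)
  define N where "N = d*d"
  have U: "U \<in> carrier_mat (d*N) d"
    and ch: "\<And>\<rho>. \<rho> \<in> carrier_mat d d \<Longrightarrow> chi_channel d \<chi> \<rho> = ptrace_env d N (U * \<rho> * adj U)"
    using iso unfolding isometric_extension_def N_def by auto
  fix p q assume "p < dim_row \<chi>" "q < dim_col \<chi>"
  hence pq: "p < N" "q < N" using chi unfolding N_def by auto
  define b a b' a' where "b = p div d" "a = p mod d" "b' = q div d" "a' = q mod d"
  have lt: "b < d" "a < d" "b' < d" "a' < d"
    using div_mod_less_of_less_square pq unfolding b_a_b'_a'_def N_def by auto
  have p: "p = b*d+a" and q: "q = b'*d+a'" unfolding b_a_b'_a'_def by simp_all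
  have "(kraus_mat d U * adj (kraus_mat d U)) $$ (p,q) = (\<Sum>e<N. U $$ (b*N+e, a) * cnj (U $$ (b'*N+e, a')))"
    using pq lt unfolding p q N_def by (simp add: scalar_prod_def atLeast0LessThan index_kraus_mat)
  also have "\<dots> = (\<Sum>e<N. (U * Et d (a*d+a') * adj U) $$ (b*N+e, b'*N+e))"
    using index_sandwich_Et[OF U lt(2,4)] mult_add_less_mult lt by simp
  also have "\<dots> = chi_channel d \<chi> (Et d (a*d+a')) $$ (b,b')"
    unfolding ch[OF Et_carrier] ptrace_env_def using lt by simp
  also have "\<dots> = \<chi> $$ (p,q)" unfolding p q using chi_channel_Et lt by simp
  finally show "(kraus_mat d U * adj (kraus_mat d U)) $$ (p,q) = \<chi> $$ (p,q)" .
qed (use chi in auto)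

lemma ptrace_out_kraus_mat:
  assumes U: "U \<in> carrier_mat (d*(d*d)) d" and \<rho>: "\<rho> \<in> carrier_mat d d"
  shows "ptrace_out d (d*d) (U * \<rho> * adj U)
    = transpose_mat (kraus_mat d U) * rho_tilde d \<rho> * conj_mat (kraus_mat d U)"
proof (rule eq_matI)
  define N where "N = d*d"
  define G where "G = kraus_mat d U"
  have G: "transpose_mat G \<in> carrier_mat N N" unfolding G_def N_def by auto
  have R: "rho_tilde d \<rho> \<in> carrier_mat N N" unfolding rho_tilde_def N_def
    by (simp add: power2_eq_square)
  have conjG: "conj_mat G = adj (transpose_mat G)" by (simp add: adj_transpose_mat transpose_adj)
  fix e f assume "e < dim_row (transpose_mat (kraus_mat d U) * rho_tilde d \<rho> * conj_mat (kraus_mat d U))"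
    "f < dim_col (transpose_mat (kraus_mat d U) * rho_tilde d \<rho> * conj_mat (kraus_mat d U))"
  hence ef: "e < N" "f < N" unfolding N_def by simp_all
  have "(transpose_mat G * rho_tilde d \<rho> * conj_mat G) $$ (e,f)
      = (\<Sum>x<d. \<Sum>a<d. \<Sum>y<d. \<Sum>a'<d. G $$ (x*d+a, e) * rho_tilde d \<rho> $$ (x*d+a, y*d+a') * cnj (G $$ (y*d+a', f)))"
    unfolding conjG index_sandwich[OF G R G ef] N_def sum_lessThan_mult
    using ef mult_add_less_mult[of _ d _ d] unfolding N_def by (intro sum.cong refl) (simp add: G_def)
  also have "\<dots> = (\<Sum>x<d. \<Sum>a<d. \<Sum>y<d. if y = x then
      (\<Sum>a'<d. U $$ (x*N+e, a) * \<rho> $$ (a,a') * cnj (U $$ (y*N+f, a'))) else 0)"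
    using ef \<rho> by (intro sum.cong refl) (auto simp: index_rho_tilde index_kraus_mat G_def N_def)
  also have "\<dots> = (\<Sum>y<d. \<Sum>a<d. \<Sum>a'<d. U $$ (y*N+e, a) * \<rho> $$ (a,a') * cnj (U $$ (y*N+f, a')))"
    by simp
  also have "\<dots> = ptrace_out d N (U * \<rho> * adj U) $$ (e,f)"
    unfolding ptrace_out_def using index_sandwich[OF U \<rho> U] mult_add_less_mult ef unfolding N_def
    by simp
  finally show "ptrace_out d (d*d) (U * \<rho> * adj U) $$ (e,f)
      = (transpose_mat (kraus_mat d U) * rho_tilde d \<rho> * conj_mat (kraus_mat d U)) $$ (e,f)"
    unfolding G_def N_def by simp
qed (simp_all add: ptrace_out_def)

lemma complementary_channel_hermitian_sqrt:
  assumes chi: "\<chi> \<in> carrier_mat (d*d) (d*d)"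
    and iso: "isometric_extension d d (d*d) (chi_channel d \<chi>) U"
    and S: "S \<in> carrier_mat (d*d) (d*d)" "adj S = S" "S * S = \<chi>"
  shows "\<exists>W. unitary_mat (d*d) W \<and> (\<forall>\<rho> \<in> carrier_mat d d.
    ptrace_out d (d*d) (U * \<rho> * adj U) = W * (conj_mat S * rho_tilde d \<rho> * conj_mat S) * adj W)"
proof -
  obtain Z where Zu: "unitary_mat (d*d) Z" and GZ: "kraus_mat d U = S * Z"
    using unitary_freedom_hermitian[OF S(1,2) kraus_mat_carrier] kraus_mat_mult_adj[OF iso chi] S(3)
    by auto
  note Z = unitary_matD(1)[OF Zu]
  define W where "W = transpose_mat Z"
  have "transpose_mat (kraus_mat d U) = W * conj_mat S"
    unfolding GZ W_def using S Z by (simp add: transpose_mult[of S _ _ Z] transpose_hermitian)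
  moreover have "conj_mat (kraus_mat d U) = conj_mat S * adj W"
    unfolding GZ W_def using S Z by (simp add: conj_mat_mult adj_transpose_mat transpose_adj)
  moreover have "U \<in> carrier_mat (d*(d*d)) d" using iso unfolding isometric_extension_def by simp
  ultimately have "ptrace_out d (d*d) (U * \<rho> * adj U) = W * (conj_mat S * rho_tilde d \<rho> * conj_mat S) * adj W"
    if "\<rho> \<in> carrier_mat d d" for \<rho>
    using ptrace_out_kraus_mat[OF _ that, of U] S Z unfolding W_def
    by (simp add: assoc_mult_mat_dims rho_tilde_def power2_eq_square)
  thus ?thesis using unitary_mat_transpose[OF Zu] unfolding W_def by blast
qed

theorem lemma20:
  fixes d :: nat and \<chi> :: "complex mat"
  assumes "\<chi> \<in> carrier_mat (d^2) (d^2)"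
    and "quantum_channel d d (chi_channel d \<chi>)"
  shows "(\<exists>U. isometric_extension d d (d^2) (chi_channel d \<chi>) U) \<and>
         (\<forall>U. isometric_extension d d (d^2) (chi_channel d \<chi>) U \<longrightarrow>
            (\<exists>W. unitary_mat (d^2) W \<and>
               (\<forall>\<rho> \<in> carrier_mat d d.
                  ptrace_out d (d^2) (U * \<rho> * adj U) =
                  W * (conj_mat (psd_sqrt (d^2) \<chi>) * rho_tilde d \<rho> * conj_mat (psd_sqrt (d^2) \<chi>)) * adj W)))"
proof -
  have chi: "\<chi> \<in> carrier_mat (d*d) (d*d)" using assms(1) by (simp add: power2_eq_square)
  define S where "S = psd_sqrt (d*d) \<chi>"
  have S: "psd (d*d) S" "S * S = \<chi>" using psd_sqrt[OF chi_psd[OF chi assms(2)]] unfolding S_def by auto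
  note Sc = psdD(1,2)[OF S(1)]
  have "isometric_extension d d (d*d) (chi_channel d \<chi>) (sqrt_dilation d S)"
    using isometric_extension_sqrt_dilation[OF Sc] assms(2) unfolding S(2) .
  moreover have "\<exists>W. unitary_mat (d*d) W \<and> (\<forall>\<rho> \<in> carrier_mat d d.
      ptrace_out d (d*d) (U * \<rho> * adj U) = W * (conj_mat S * rho_tilde d \<rho> * conj_mat S) * adj W)"
    if "isometric_extension d d (d*d) (chi_channel d \<chi>) U" for U
    using complementary_channel_hermitian_sqrt[OF chi that Sc S(2)] .
  ultimately show ?thesis unfolding S_def power2_eq_square by blast
qed

end
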